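(* Let $(v_{s,t})_{(s,t)\in\Delta}$ be an absolutely continuous reverse evolution family in $\mathbb H$ contained in $\mathcal{BF}_0$, with associated Herglotz vector field $\phi$, and suppose $\int_0^{+\infty}\phi''(\infty,t)\,\mathrm dt=+\infty$. Then for every $s\ge0$, $\lim_{t\to\infty}v_{s,t}(\infty)=0$; consequently, for the branching process $(Z_t)$ whose Laplace exponents are $(v_{s,t})$, $\mathbb P^{(s,x)}[T_0^s<\infty]=1$ for all $x>0$ and $s\ge0$.
   Context: $\Delta=\{(s,t):0\le s\le t\}$, $\mathbb H=\{\operatorname{Re}\zeta>0\}$; $L^1_{\rm loc}$: integrable on compact subintervals of $[0,\infty)$. $\mathcal{BF}$: Bernstein functions ($C^\infty$ $f:(0,\infty)\to\mathbb R$, $f\ge0$, $(-1)^{n-1}f^{(n)}\ge0$) not identically zero, extended holomorphically to $\mathbb H$. Denjoy–Wolff point of $v\in{\sf Hol}(\mathbb H,\mathbb H)$ (not ${\rm id}$, not an elliptic automorphism): the unique $\tau\in\overline{\mathbb H}\cup\{\infty\}$ with $v^{\circ n}\to\tau$ locally uniformly. $\mathcal{BF}_0$: ${\rm id}$ together with the $v\in\mathcal{BF}$ with Denjoy–Wolff point $0$. Absolutely continuous reverse evolution family: $v_{s,s}={\rm id}$, $v_{s,u}=v_{s,t}\circ v_{t,u}$, $|v_{s,u}(z)-v_{s,t}(z)|\le\int_t^uf_z$ with $f_z\in L^1_{\rm loc}$ nonnegative. Its associated Herglotz vector field is the (a.e. unique) $\phi$ with $\frac{\mathrm d}{\mathrm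 ds}v_{s,t}(\zeta)=\phi(v_{s,t}(\zeta),s)$ for a.e. $s\in[0,t]$; $\phi''$ denotes the second derivative in the spatial variable and $\phi''(\infty,t):=\lim_{\theta\to+\infty}\phi''(\theta,t)$ (it exists and is $\ge0$ for a.e. $t$). $v_{s,t}(\infty):=\lim_{\theta\to+\infty}v_{s,t}(\theta)$. A branching process on $[0,\infty]$ with Laplace exponents $(v_{s,t})$ is a Markov family $(Z_t)$ with probabilities $\mathbb P^{(s,x)}$ whose transition kernels $k_{s,t}$ satisfy $\int_{[0,\infty)}e^{-\theta y}k_{s,t}(x,\mathrm dy)=e^{-xv_{s,t}(\theta)}$ (plus $k_{s,t}(0,\cdot)=\delta_0$, $k_{s,t}(\infty,\cdot)=\delta_\infty$); here it is taken to be realized with sample paths in $D[0,\infty)$: càdlàg paths into $[0,\infty]$ that stay forever at $0$ (resp. $\infty$) once they or their left limits reach it. Extinction time: $T_0^s=\inf\{t\ge s:Z_t=0\}$. *)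

theory Defs
  imports "HOL-Complex_Analysis.Complex_Analysis" "HOL-Probability.Probability"
begin

definition RHP :: "complex set" where
  "RHP = {z. Re z > 0}"

definition hol_self :: "(complex \<Rightarrow> complex) \<Rightarrow> bool" where
  "hol_self f \<longleftrightarrow> f holomorphic_on RHP \<and> f ` RHP \<subseteq> RHP"

definition bernstein :: "(real \<Rightarrow> real) \<Rightarrow> bool" where
  "bernstein g \<longleftrightarrow>
     (\<forall>n. \<forall>x>0. ((deriv ^^ n) g has_real_derivative (deriv ^^ Suc n) g x) (at x)) \<and>
     (\<forall>x>0. g x \<ge> 0) \<and>
     (\<forall>n\<ge>1. \<forall>x>0. (-1) ^ (n - 1) * (deriv ^^ n) g x \<ge> 0) \<and>
     (\<exists>x>0. g x \<noteq> 0)"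

definition in_BF :: "(complex \<Rightarrow> complex) \<Rightarrow> bool" where
  "in_BF v \<longleftrightarrow> v holomorphic_on RHP \<and> (\<forall>x::real>0. v (of_real x) \<in> \<real>) \<and>
     bernstein (\<lambda>x. Re (v (of_real x)))"

definition elliptic_aut :: "(complex \<Rightarrow> complex) \<Rightarrow> bool" where
  "elliptic_aut v \<longleftrightarrow> v holomorphic_on RHP \<and> inj_on v RHP \<and> v ` RHP = RHP \<and>
     (\<exists>z\<in>RHP. v z = z)"

text \<open>Denjoy--Wolff point of v equals 0: v is not the identity, not an elliptic
  automorphism, and the iterates converge locally uniformly on the half-plane to 0.\<close>
definition DW_zero :: "(complex \<Rightarrow> complex) \<Rightarrow> bool" where
  "DW_zero v \<longleftrightarrow> hol_self v \<and> (\<exists>z\<in>RHP. v z \<noteq> z) \<and> \<not> elliptic_aut v \<and>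
     (\<forall>K. compact K \<and> K \<subseteq> RHP \<longrightarrow>
        uniform_limit K (\<lambda>n. v ^^ n) (\<lambda>_. 0) sequentially)"

definition in_BF0 :: "(complex \<Rightarrow> complex) \<Rightarrow> bool" where
  "in_BF0 v \<longleftrightarrow> (\<forall>z\<in>RHP. v z = z) \<or> (in_BF v \<and> DW_zero v)"

definition abs_cont_rev_evol_family :: "(real \<Rightarrow> real \<Rightarrow> complex \<Rightarrow> complex) \<Rightarrow> bool" where
  "abs_cont_rev_evol_family v \<longleftrightarrow>
     (\<forall>s t. 0 \<le> s \<and> s \<le> t \<longrightarrow> hol_self (v s t)) \<and>
     (\<forall>s\<ge>0. \<forall>z\<in>RHP. v s s z = z) \<and>
     (\<forall>s t u. 0 \<le> s \<and> s \<le> t \<and> t \<le> u \<longrightarrow> (\<forall>z\<in>RHP. v s u z = v s t (v t u z))) \<and>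
     (\<forall>z\<in>RHP. \<exists>f::real \<Rightarrow> real. (\<forall>t\<ge>0. f t \<ge> 0) \<and> (\<forall>T. f integrable_on {0..T}) \<and>
        (\<forall>s t u. 0 \<le> s \<and> s \<le> t \<and> t \<le> u \<longrightarrow> cmod (v s u z - v s t z) \<le> integral {t..u} f))"

definition assoc_herglotz_vf ::
  "(real \<Rightarrow> real \<Rightarrow> complex \<Rightarrow> complex) \<Rightarrow> (complex \<Rightarrow> real \<Rightarrow> complex) \<Rightarrow> bool" where
  "assoc_herglotz_vf v \<phi> \<longleftrightarrow>
     (AE t in lborel. 0 \<le> t \<longrightarrow> (\<lambda>z. \<phi> z t) holomorphic_on RHP) \<and>
     (\<forall>t\<ge>0. \<forall>\<zeta>\<in>RHP. AE s in lborel. s \<in> {0..t} \<longrightarrow>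
        ((\<lambda>r. v r t \<zeta>) has_vector_derivative \<phi> (v s t \<zeta>) s) (at s within {0..t}))"

definition phi2_inf :: "(complex \<Rightarrow> real \<Rightarrow> complex) \<Rightarrow> real \<Rightarrow> real" where
  "phi2_inf \<phi> t = Re (Lim at_top (\<lambda>\<theta>::real. deriv (deriv (\<lambda>z. \<phi> z t)) (of_real \<theta>)))"

definition v_inf :: "(real \<Rightarrow> real \<Rightarrow> complex \<Rightarrow> complex) \<Rightarrow> real \<Rightarrow> real \<Rightarrow> ennreal" where
  "v_inf v s t = Lim at_top (\<lambda>\<theta>::real. ennreal (Re (v s t (of_real \<theta>))))"

definition Dpaths :: "(real \<Rightarrow> ennreal) set" where
  "Dpaths = {f. (\<forall>t\<ge>0. (f \<longlongrightarrow> f t) (at_right t)) \<and>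
                (\<forall>t>0. \<exists>l. (f \<longlongrightarrow> l) (at_left t)) \<and>
                (\<forall>t\<ge>0. f t = 0 \<longrightarrow> (\<forall>u\<ge>t. f u = 0)) \<and>
                (\<forall>t>0. (f \<longlongrightarrow> 0) (at_left t) \<longrightarrow> (\<forall>u\<ge>t. f u = 0)) \<and>
                (\<forall>t\<ge>0. f t = \<infinity> \<longrightarrow> (\<forall>u\<ge>t. f u = \<infinity>)) \<and>
                (\<forall>t>0. (f \<longlongrightarrow> \<infinity>) (at_left t) \<longrightarrow> (\<forall>u\<ge>t. f u = \<infinity>))}"

definition laplace_kernels ::
  "(real \<Rightarrow> real \<Rightarrow> complex \<Rightarrow> complex) \<Rightarrow> (real \<Rightarrow> real \<Rightarrow> ennreal \<Rightarrow> ennreal measure) \<Rightarrow> bool" where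
  "laplace_kernels v k \<longleftrightarrow>
     (\<forall>s t. 0 \<le> s \<and> s \<le> t \<longrightarrow>
        (\<forall>x. prob_space (k s t x) \<and> sets (k s t x) = sets borel) \<and>
        (\<forall>x::real\<ge>0. \<forall>\<theta>::real>0.
           (\<integral>\<^sup>+ y. indicator {..<\<infinity>} y * ennreal (exp (- \<theta> * enn2real y)) \<partial>k s t (ennreal x))
             = ennreal (exp (- x * Re (v s t (of_real \<theta>))))) \<and>
        k s t 0 = return borel 0 \<and> k s t \<infinity> = return borel \<infinity>)"

definition branching_process ::
  "(real \<Rightarrow> real \<Rightarrow> complex \<Rightarrow> complex) \<Rightarrow> (real \<Rightarrow> ennreal \<Rightarrow> 'w measure) \<Rightarrow>
   (real \<Rightarrow> 'w \<Rightarrow> ennreal) \<Rightarrow> bool" where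
  "branching_process v P Z \<longleftrightarrow>
     (\<exists>k. laplace_kernels v k \<and>
       (\<forall>s s' x x'. sets (P s x) = sets (P s' x')) \<and>
       (\<forall>s x. prob_space (P s x) \<and> (\<forall>t. Z t \<in> borel_measurable (P s x)) \<and>
              (\<forall>\<omega>\<in>space (P s x). (\<lambda>t. Z t \<omega>) \<in> Dpaths)) \<and>
       (\<forall>s\<ge>0. \<forall>x. AE \<omega> in P s x. Z s \<omega> = x) \<and>
       (\<forall>s x t u B A. 0 \<le> s \<and> s \<le> t \<and> t \<le> u \<and> B \<in> sets borel \<and>
          A \<in> sigma_sets (space (P s x))
                 {{\<omega>\<in>space (P s x). Z r \<omega> \<in> C} | r C. r \<in> {s..t} \<and> C \<in> sets borel} \<longrightarrow>
          emeasure (P s x) (A \<inter> {\<omega>\<in>space (P s x). Z u \<omega> \<in> B})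
            = (\<integral>\<^sup>+\<omega>\<in>A. emeasure (k t u (Z t \<omega>)) B \<partial>P s x)))"

text \<open>Extinction time T_0^s = inf {t >= s. Z_t = 0} (in [s,oo], inf of empty set = oo).\<close>
definition extinction_time :: "(real \<Rightarrow> 'w \<Rightarrow> ennreal) \<Rightarrow> real \<Rightarrow> 'w \<Rightarrow> ereal" where
  "extinction_time Z s \<omega> = Inf (ereal ` {t. s \<le> t \<and> Z t \<omega> = 0})"

end

theory Submission
  imports Defs
begin

text \<open>
  For almost every \<open>s\<close>, the Herglotz field \<open>\<psi> = \<phi>(\<cdot>,s)\<close> on the positive axis is the limit of
  the difference quotients \<open>n (w - v\<^bsub>s-1/n,s\<^esub>(w))\<close>. Each \<open>v\<^bsub>r,s\<^esub>\<close> is a Bernstein function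
  lying below the identity (its Denjoy--Wolff point is \<open>0\<close>), so the quotients are nonnegative,
  \<open>w \<mapsto> q(w)/w\<close> is nondecreasing and their second differences are nonnegative and
  nonincreasing. These properties pass to \<open>\<psi>\<close>, whence \<open>\<psi>'' \<ge> \<phi>''(\<infinity>,s)\<close> and
  \<open>\<psi>(w) \<ge> \<phi>''(\<infinity>,s) w\<^sup>2/2\<close>.

  Along \<open>r \<mapsto> G(r) = v\<^bsub>r,T\<^esub>(\<theta>)\<close> this gives \<open>(2/G)' \<le> -\<phi>''(\<infinity>,r)\<close>, hence
  \<open>\<integral>\<^bsub>s+1\<^esub>\<^sup>T \<phi>''(\<infinity>,r) dr \<le> 2 / v\<^bsub>s,T\<^esub>(\<theta>)\<close> uniformly in \<open>\<theta>\<close>, and the divergence of the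
  integral forces \<open>v\<^bsub>s,T\<^esub>(\<infinity>) \<rightarrow> 0\<close>. For the branching process, letting \<open>\<theta> \<rightarrow> \<infinity>\<close> in
  the Laplace transform gives \<open>P(Z\<^sub>T = 0) \<ge> exp (-x v\<^bsub>s,T\<^esub>(\<infinity>)) \<rightarrow> 1\<close>, and \<open>0\<close> is absorbing.
\<close>

section \<open>Second differences on the positive half-line\<close>

definition second_diff :: "(real \<Rightarrow> real) \<Rightarrow> real \<Rightarrow> real \<Rightarrow> real" where
  "second_diff f x h = f (x + 2*h) - 2 * f (x + h) + f x"

lemma second_diff_mean_value:
  assumes f': "\<And>x. 0 < x \<Longrightarrow> (f has_real_derivative f' x) (at x)"
    and f'': "\<And>x. 0 < x \<Longrightarrow> (f' has_real_derivative f'' x) (at x)"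
    and x: "0 < x" and h: "0 < h"
  obtains \<eta> where "x < \<eta>" "\<eta> < x + 2*h" "second_diff f x h = h\<^sup>2 * f'' \<eta>"
proof -
  define A where "A = (\<lambda>y. f (y + h) - f y)"
  have "(A has_real_derivative f' (y + h) - f' y) (at y)" if "0 < y" for y
    unfolding A_def using that h
    by (auto intro!: derivative_eq_intros DERIV_chain2[OF f'] simp: add_pos_pos)
  then obtain \<xi> where \<xi>: "x < \<xi>" "\<xi> < x + h" "A (x + h) - A x = h * (f' (\<xi> + h) - f' \<xi>)"
    using MVT2[of x "x + h" A "\<lambda>y. f' (y + h) - f' y"] x h by force
  obtain \<eta> where \<eta>: "\<xi> < \<eta>" "\<eta> < \<xi> + h" "f' (\<xi> + h) - f' \<xi> = h * f'' \<eta>"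
    using MVT2[of \<xi> "\<xi> + h" f' f''] f'' \<xi> x h by force
  have "second_diff f x h = A (x + h) - A x"
    unfolding A_def second_diff_def by (simp add: add.assoc)
  also have "\<dots> = h\<^sup>2 * f'' \<eta>"
    using \<xi>(3) \<eta>(3) by (simp add: power2_eq_square)
  finally have "second_diff f x h = h\<^sup>2 * f'' \<eta>" .
  moreover have "x < \<eta>" "\<eta> < x + 2*h" using \<xi> \<eta> by auto
  ultimately show thesis using that by blast
qed

lemma second_diff_mono_if_third_deriv_nonneg:
  assumes f': "\<And>x. 0 < x \<Longrightarrow> (f has_real_derivative f' x) (at x)"
    and f'': "\<And>x. 0 < x \<Longrightarrow> (f' has_real_derivative f'' x) (at x)"
    and f''': "\<And>x. 0 < x \<Longrightarrow> (f'' has_real_derivative f''' x) (at x)"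
    and nonneg: "\<And>x. 0 < x \<Longrightarrow> 0 \<le> f''' x"
    and "0 < x" "x \<le> y" "0 < h"
  shows "second_diff f x h \<le> second_diff f y h"
proof (rule deriv_nonneg_imp_mono[where g = "\<lambda>x. second_diff f x h"])
  fix z assume "z \<in> {x..y}"
  then have z: "0 < z" using \<open>0 < x\<close> by auto
  show "((\<lambda>x. second_diff f x h) has_real_derivative second_diff f' z h) (at z)"
    unfolding second_diff_def using z \<open>0 < h\<close>
    by (auto intro!: derivative_eq_intros DERIV_chain2[OF f'] simp: add_pos_pos)
  obtain \<eta> where "z < \<eta>" "second_diff f' z h = h\<^sup>2 * f''' \<eta>"
    using second_diff_mean_value[OF f'' f''' z \<open>0 < h\<close>] by blast
  then show "0 \<le> second_diff f' z h" using nonneg z by simp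
qed (use assms in auto)

lemma second_deriv_le_if_second_diff_le:
  assumes f': "\<And>x. 0 < x \<Longrightarrow> (f has_real_derivative f' x) (at x)"
    and f'': "\<And>x. 0 < x \<Longrightarrow> (f' has_real_derivative f'' x) (at x)"
    and g': "\<And>x. 0 < x \<Longrightarrow> (g has_real_derivative g' x) (at x)"
    and g'': "\<And>x. 0 < x \<Longrightarrow> (g' has_real_derivative g'' x) (at x)"
    and cont: "isCont f'' y" "isCont g'' x" and pos: "0 < x" "0 < y"
    and le: "\<And>h. 0 < h \<Longrightarrow> second_diff f y h \<le> second_diff g x h"
  shows "f'' y \<le> g'' x"
proof (rule ccontr)
  assume neg: "\<not> f'' y \<le> g'' x"
  define m where "m = (f'' y + g'' x) / 2"
  have "(f'' \<longlongrightarrow> f'' y) (at_right y)" "(g'' \<longlongrightarrow> g'' x) (at_right x)"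
    using cont by (simp_all add: isCont_def filterlim_at_split)
  moreover have "m < f'' y" "g'' x < m" using neg unfolding m_def by auto
  ultimately have "eventually (\<lambda>z. m < f'' z) (at_right y)"
    "eventually (\<lambda>z. g'' z < m) (at_right x)"
    by (auto dest: order_tendstoD)
  then obtain b c where b: "y < b" "\<And>z. y < z \<Longrightarrow> z < b \<Longrightarrow> m < f'' z"
    and c: "x < c" "\<And>z. x < z \<Longrightarrow> z < c \<Longrightarrow> g'' z < m"
    unfolding eventually_at_right_field by blast
  define h where "h = min (b - y) (c - x) / 2"
  have h: "0 < h" "y + 2*h \<le> b" "x + 2*h \<le> c" using b c unfolding h_def by auto
  obtain \<eta> where \<eta>: "y < \<eta>" "\<eta> < y + 2*h" "second_diff f y h = h\<^sup>2 * f'' \<eta>"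
    using second_diff_mean_value[OF f' f'' pos(2) h(1)] .
  obtain \<zeta> where \<zeta>: "x < \<zeta>" "\<zeta> < x + 2*h" "second_diff g x h = h\<^sup>2 * g'' \<zeta>"
    using second_diff_mean_value[OF g' g'' pos(1) h(1)] .
  have "g'' \<zeta> < f'' \<eta>" using b(2)[of \<eta>] c(2)[of \<zeta>] \<eta> \<zeta> h by fastforce
  then have "second_diff g x h < second_diff f y h"
    using \<eta>(3) \<zeta>(3) h(1) by simp
  then show False using le[OF h(1)] by simp
qed

lemma deriv_nonneg_if_mono:
  fixes f :: "real \<Rightarrow> real"
  assumes mono: "\<And>y. x \<le> y \<Longrightarrow> f x \<le> f y" and f': "(f has_real_derivative D) (at x)"
  shows "0 \<le> D"
proof (rule tendsto_lowerbound)
  show "((\<lambda>y. (f y - f x) / (y - x)) \<longlongrightarrow> D) (at_right x)"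
    using f' by (simp add: has_field_derivative_iff filterlim_at_split)
  show "eventually (\<lambda>y. 0 \<le> (f y - f x) / (y - x)) (at_right x)"
    using mono by (auto simp: eventually_at_right_field intro!: exI[of _ "x + 1"])
qed simp

lemma divide_self_antimono_if_deriv_antimono:
  assumes g': "\<And>x. 0 < x \<Longrightarrow> (g has_real_derivative g' x) (at x)"
    and anti: "\<And>x y. 0 < x \<Longrightarrow> x \<le> y \<Longrightarrow> g' y \<le> g' x"
    and nonneg: "\<And>x. 0 < x \<Longrightarrow> 0 \<le> g x"
    and "0 < x" "x \<le> y"
  shows "g y / y \<le> g x / x"
proof -
  have tangent: "z * g' z \<le> g z" if z: "0 < z" for z
  proof (rule tendsto_upperbound)
    show "((\<lambda>e. (z - e) * g' z) \<longlongrightarrow> z * g' z) (at_right 0)"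
      by (auto intro!: tendsto_eq_intros)
    have "(z - e) * g' z \<le> g z" if e: "0 < e" "e < z" for e
    proof -
      obtain \<xi> where "e < \<xi>" "\<xi> < z" "g z - g e = (z - e) * g' \<xi>"
        using MVT2[of e z g g'] g' e by force
      moreover have "(z - e) * g' z \<le> (z - e) * g' \<xi>"
        using anti[of \<xi> z] \<open>e < \<xi>\<close> \<open>\<xi> < z\<close> e by (intro mult_left_mono) auto
      ultimately show ?thesis using nonneg[OF e(1)] by linarith
    qed
    then show "eventually (\<lambda>e. (z - e) * g' z \<le> g z) (at_right 0)"
      using z by (auto simp: eventually_at_right_field)
  qed simp
  show ?thesis
  proof (rule DERIV_nonpos_imp_nonincreasing[where f = "\<lambda>x. g x / x", OF \<open>x \<le> y\<close>])
    fix z assume "x \<le> z" "z \<le> y"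
    then have z: "0 < z" using \<open>0 < x\<close> by linarith
    show "\<exists>D. ((\<lambda>x. g x / x) has_real_derivative D) (at z) \<and> D \<le> 0"
      using g'[OF z] tangent[OF z] z
      by (auto intro!: exI derivative_eq_intros simp: field_simps power2_eq_square)
  qed
qed

lemma quadratic_lower_bound:
  assumes f': "\<And>x. 0 < x \<Longrightarrow> (f has_real_derivative f' x) (at x)"
    and f'': "\<And>x. 0 < x \<Longrightarrow> (f' has_real_derivative f'' x) (at x)"
    and nonneg: "\<And>x. 0 < x \<Longrightarrow> 0 \<le> f x" "\<And>x. 0 < x \<Longrightarrow> 0 \<le> f' x"
    and lower: "\<And>x. 0 < x \<Longrightarrow> L \<le> f'' x" and w: "0 < w"
  shows "L * w\<^sup>2 / 2 \<le> f w"
proof -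
  define q where "q = (\<lambda>x. f x - L * x\<^sup>2 / 2)"
  define q' where "q' = (\<lambda>x. f' x - L * x)"
  have q': "(q has_real_derivative q' x) (at x)" if "0 < x" for x
    unfolding q_def q'_def using f'[OF that] by (auto intro!: derivative_eq_intros)
  have q'_mono: "q' y \<le> q' z" if "0 < y" "y \<le> z" for y z
    by (rule deriv_nonneg_imp_mono[where g = q' and g' = "\<lambda>x. f'' x - L"])
      (use that lower in \<open>auto simp: q'_def intro!: derivative_eq_intros f''\<close>)
  have "0 \<le> q w"
  proof (rule tendsto_upperbound)
    show "((\<lambda>y. - L * y\<^sup>2 / 2 - (w - y) * (L * y)) \<longlongrightarrow> 0) (at_right 0)"
      by (auto intro!: tendsto_eq_intros)
    have "- L * y\<^sup>2 / 2 - (w - y) * (L * y) \<le> q w" if y: "0 < y" "y < w" for y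
    proof -
      obtain \<xi> where "y < \<xi>" "\<xi> < w" "q w - q y = (w - y) * q' \<xi>"
        using MVT2[of y w q q'] q' y by force
      moreover have "- (L * y) \<le> q' \<xi>"
        using q'_mono[of y \<xi>] nonneg(2)[OF y(1)] \<open>y < \<xi>\<close> y unfolding q'_def by simp
      ultimately have "q y - (w - y) * (L * y) \<le> q w"
        using mult_left_mono[of "- (L * y)" "q' \<xi>" "w - y"] y by simp
      then show ?thesis using nonneg(1)[OF y(1)] unfolding q_def by simp
    qed
    then show "eventually (\<lambda>y. - L * y\<^sup>2 / 2 - (w - y) * (L * y) \<le> q w) (at_right 0)"
      using w by (auto simp: eventually_at_right_field)
  qed simp
  then show ?thesis unfolding q_def by simp
qed

lemma tendsto_if_mono_and_tendsto_on_dense: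
  fixes F :: "nat \<Rightarrow> real \<Rightarrow> real"
  assumes mono: "eventually (\<lambda>n. \<forall>x y. 0 < x \<longrightarrow> x \<le> y \<longrightarrow> F n x \<le> F n y) sequentially"
    and dense: "\<And>a b. 0 < a \<Longrightarrow> a < b \<Longrightarrow> \<exists>y\<in>D. a < y \<and> y < b"
    and lim: "\<And>y. y \<in> D \<Longrightarrow> (\<lambda>n. F n y) \<longlonglongrightarrow> h y"
    and cont: "isCont h w" and w: "0 < w"
  shows "(\<lambda>n. F n w) \<longlonglongrightarrow> h w"
proof (rule order_tendstoI)
  fix a assume "a < h w"
  then have "eventually (\<lambda>y. a < h y) (at_left w)"
    using cont by (auto simp: isCont_def filterlim_at_split dest: order_tendstoD)
  then obtain b where "b < w" and b: "\<And>y. b < y \<Longrightarrow> y < w \<Longrightarrow> a < h y"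
    unfolding eventually_at_left_field by blast
  have "0 < max b (w/2)" "max b (w/2) < w" using \<open>b < w\<close> w by auto
  then obtain y where y: "y \<in> D" "max b (w/2) < y" "y < w" using dense by blast
  then have "0 < y" "a < h y" using b w by auto
  then have "eventually (\<lambda>n. a < F n y) sequentially"
    using lim[OF y(1)] by (auto dest: order_tendstoD)
  then show "eventually (\<lambda>n. a < F n w) sequentially"
    using mono
  proof eventually_elim
    case (elim n)
    then show ?case using elim(2)[rule_format, of y w] \<open>0 < y\<close> y(3) by linarith
  qed
next
  fix a assume "h w < a"
  then have "eventually (\<lambda>y. h y < a) (at_right w)"
    using cont by (auto simp: isCont_def filterlim_at_split dest: order_tendstoD)
  then obtain b where "w < b" and b: "\<And>y. w < y \<Longrightarrow> y < b \<Longrightarrow> h y < a"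
    unfolding eventually_at_right_field by blast
  then obtain y where y: "y \<in> D" "w < y" "y < b"
    using dense[of w b] w by auto
  then have "eventually (\<lambda>n. F n y < a) sequentially"
    using lim[OF y(1)] b[OF y(2,3)] by (auto dest: order_tendstoD)
  then show "eventually (\<lambda>n. F n w < a) sequentially"
    using mono
  proof eventually_elim
    case (elim n)
    then show ?case using elim(2)[rule_format, of w y] w y(2) by linarith
  qed
qed

lemma zero_if_zero_on_dense:
  fixes h :: "real \<Rightarrow> real"
  assumes "\<And>a b. 0 < a \<Longrightarrow> a < b \<Longrightarrow> \<exists>y\<in>D. a < y \<and> y < b"
    and "\<And>y. y \<in> D \<Longrightarrow> h y = 0" and "isCont h w" and "0 < w"
  shows "h w = 0"
proof -
  have "(\<lambda>n. 0) \<longlonglongrightarrow> h w"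
    by (rule tendsto_if_mono_and_tendsto_on_dense[where F = "\<lambda>n x. 0" and D = D and h = h])
      (use assms in auto)
  then show ?thesis by (simp add: LIMSEQ_const_iff)
qed

lemma tendsto_INF_at_top_if_antimono:
  fixes f :: "real \<Rightarrow> 'a::{conditionally_complete_linorder, linorder_topology}"
  assumes anti: "\<And>x y. 0 < x \<Longrightarrow> x \<le> y \<Longrightarrow> f y \<le> f x" and bdd: "bdd_below (f ` {0<..})"
  shows "(f \<longlongrightarrow> (INF x\<in>{0<..}. f x)) at_top"
proof (rule decreasing_tendsto)
  show "eventually (\<lambda>y. (INF x\<in>{0<..}. f x) \<le> f y) at_top"
    using eventually_gt_at_top[of 0] by eventually_elim (auto intro: cINF_lower[OF bdd])
next
  fix a assume "(INF x\<in>{0<..}. f x) < a"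
  then obtain x where x: "0 < x" "f x < a"
    using cINF_less_iff[OF _ bdd] by (metis greaterThan_iff gt_ex image_is_empty empty_iff)
  show "eventually (\<lambda>y. f y < a) at_top"
    using eventually_ge_at_top[of x] by eventually_elim (use anti x in \<open>force intro: le_less_trans\<close>)
qed

lemma tendsto_SUP_at_top_if_mono:
  fixes f :: "real \<Rightarrow> 'a::{complete_linorder, linorder_topology}"
  assumes mono: "\<And>x y. 0 < x \<Longrightarrow> x \<le> y \<Longrightarrow> f x \<le> f y"
  shows "(f \<longlongrightarrow> (SUP x\<in>{0<..}. f x)) at_top"
proof (rule increasing_tendsto)
  show "eventually (\<lambda>y. f y \<le> (SUP x\<in>{0<..}. f x)) at_top"
    using eventually_gt_at_top[of 0] by eventually_elim (auto intro: SUP_upper)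
next
  fix a assume "a < (SUP x\<in>{0<..}. f x)"
  then obtain x where x: "0 < x" "a < f x" by (auto simp: less_SUP_iff)
  show "eventually (\<lambda>y. a < f y) at_top"
    using eventually_ge_at_top[of x] by eventually_elim (use mono x in \<open>force intro: less_le_trans\<close>)
qed

text \<open>Second differences pass to the second derivative, which is therefore nonnegative and
  nonincreasing; its infimum \<open>L\<close> is its limit at infinity and \<open>f'' \<ge> L\<close> integrates to the
  bound.\<close>
lemma second_diff_imp_quadratic_lower_bound:
  assumes f': "\<And>x. 0 < x \<Longrightarrow> (f has_real_derivative f' x) (at x)"
    and f'': "\<And>x. 0 < x \<Longrightarrow> (f' has_real_derivative f'' x) (at x)"
    and cont: "\<And>x. 0 < x \<Longrightarrow> isCont f'' x"
    and nonneg: "\<And>x. 0 < x \<Longrightarrow> 0 \<le> f x"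
    and ratio: "\<And>x y. 0 < x \<Longrightarrow> x \<le> y \<Longrightarrow> f x / x \<le> f y / y"
    and convex: "\<And>x h. 0 < x \<Longrightarrow> 0 < h \<Longrightarrow> 0 \<le> second_diff f x h"
    and anti: "\<And>x y h. 0 < x \<Longrightarrow> x \<le> y \<Longrightarrow> 0 < h \<Longrightarrow> second_diff f y h \<le> second_diff f x h"
  shows "(f'' \<longlongrightarrow> (INF x\<in>{0<..}. f'' x)) at_top" and "0 \<le> (INF x\<in>{0<..}. f'' x)"
    and "\<And>w. 0 < w \<Longrightarrow> (INF x\<in>{0<..}. f'' x) * w\<^sup>2 / 2 \<le> f w"
proof -
  have zero: "\<And>x. 0 < x \<Longrightarrow> ((\<lambda>_. 0::real) has_real_derivative 0) (at x)" by simp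
  have f''_nonneg: "0 \<le> f'' x" if "0 < x" for x
    by (rule second_deriv_le_if_second_diff_le[OF zero zero f' f'' _ cont])
      (use that convex in \<open>auto simp: second_diff_def\<close>)
  have f''_anti: "f'' y \<le> f'' x" if "0 < x" "x \<le> y" for x y
    by (rule second_deriv_le_if_second_diff_le[OF f' f'' f' f'' cont cont])
      (use that anti in auto)
  have bdd: "bdd_below (f'' ` {0<..})"
    using f''_nonneg by (intro bdd_belowI[of _ 0]) auto
  show "(f'' \<longlongrightarrow> (INF x\<in>{0<..}. f'' x)) at_top"
    by (rule tendsto_INF_at_top_if_antimono[OF f''_anti bdd])
  show "0 \<le> (INF x\<in>{0<..}. f'' x)" using f''_nonneg by (auto intro: cINF_greatest)
  have f_mono: "f x \<le> f y" if "0 < x" "x \<le> y" for x y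
  proof -
    have "f x = x * (f x / x)" using that by simp
    also have "\<dots> \<le> y * (f x / x)"
      using that nonneg[of x] by (intro mult_right_mono) auto
    also have "\<dots> \<le> y * (f y / y)"
      using that ratio[of x y] by (intro mult_left_mono) auto
    finally show ?thesis using that by simp
  qed
  have f'_nonneg: "0 \<le> f' x" if "0 < x" for x
    by (rule deriv_nonneg_if_mono[OF _ f'[OF that]]) (use that f_mono in auto)
  have INF_le: "(INF x\<in>{0<..}. f'' x) \<le> f'' x" if "0 < x" for x
    using cINF_lower[OF bdd, of x] that by simp
  show "(INF x\<in>{0<..}. f'' x) * w\<^sup>2 / 2 \<le> f w" if "0 < w" for w
    by (rule quadratic_lower_bound[OF f' f'' nonneg f'_nonneg INF_le that])
qed

lemma left_difference_quotient_tendsto: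
  fixes g :: "real \<Rightarrow> real"
  assumes "(g has_real_derivative D) (at s)"
  shows "(\<lambda>n. real (Suc n) * (g s - g (s - inverse (real (Suc n))))) \<longlonglongrightarrow> D"
proof -
  have quot: "((\<lambda>y. (g y - g s) / (y - s)) \<longlongrightarrow> D) (at s)"
    using assms by (simp add: has_field_derivative_iff)
  have "(\<lambda>n. s - inverse (real (Suc n))) \<longlonglongrightarrow> s"
    using tendsto_diff[OF tendsto_const LIMSEQ_inverse_real_of_nat, of s] by simp
  then have "filterlim (\<lambda>n. s - inverse (real (Suc n))) (at s) sequentially"
    unfolding filterlim_at by auto
  from filterlim_compose[OF quot this] show ?thesis
    by (simp add: field_simps)
qed

section \<open>Real traces of Bernstein functions\<close>

lemma of_real_in_RHP: "0 < x \<Longrightarrow> of_real x \<in> RHP"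
  by (simp add: RHP_def)

lemma open_RHP: "open RHP"
  unfolding RHP_def by (rule open_halfspace_Re_gt)

definition real_trace :: "(complex \<Rightarrow> complex) \<Rightarrow> real \<Rightarrow> real" where
  "real_trace u x = Re (u (of_real x))"

lemma bernstein_has_derivs:
  assumes "bernstein g" "0 < x"
  shows "(g has_real_derivative deriv g x) (at x)"
    and "(deriv g has_real_derivative deriv (deriv g) x) (at x)"
    and "(deriv (deriv g) has_real_derivative deriv (deriv (deriv g)) x) (at x)"
  using assms unfolding bernstein_def
  by (metis funpow_0 funpow_Suc_right o_apply)+

lemma bernstein_deriv_signs:
  assumes "bernstein g" "0 < x"
  shows "0 \<le> g x" and "0 \<le> deriv g x" and "deriv (deriv g) x \<le> 0"
    and "0 \<le> deriv (deriv (deriv g)) x"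
proof -
  have "\<And>n. 1 \<le> n \<Longrightarrow> 0 \<le> (-1) ^ (n - 1) * (deriv ^^ n) g x"
    using assms unfolding bernstein_def by blast
  from this[of 1] this[of 2] this[of 3] show "0 \<le> deriv g x" "deriv (deriv g) x \<le> 0"
      "0 \<le> deriv (deriv (deriv g)) x"
    by (simp_all add: numeral_eq_Suc)
  show "0 \<le> g x" using assms unfolding bernstein_def by blast
qed

lemma bernstein_mono:
  assumes "bernstein g" "0 < x" "x \<le> y"
  shows "g x \<le> g y"
  by (rule deriv_nonneg_imp_mono[of x y g "deriv g"])
    (use assms bernstein_has_derivs bernstein_deriv_signs in auto)

lemma bernstein_deriv_antimono:
  assumes "bernstein g" "0 < x" "x \<le> y"
  shows "deriv g y \<le> deriv g x"
proof (rule DERIV_nonpos_imp_nonincreasing[OF \<open>x \<le> y\<close>])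
  fix z assume "x \<le> z" "z \<le> y"
  then have "0 < z" using assms(2) by linarith
  then show "\<exists>D. (deriv g has_real_derivative D) (at z) \<and> D \<le> 0"
    using bernstein_has_derivs(2)[OF assms(1)] bernstein_deriv_signs(3)[OF assms(1)] by blast
qed

lemma bernstein_second_diff_nonpos:
  assumes "bernstein g" "0 < x" "0 < h"
  shows "second_diff g x h \<le> 0"
proof -
  obtain \<eta> where "x < \<eta>" "second_diff g x h = h\<^sup>2 * deriv (deriv g) \<eta>"
    using second_diff_mean_value[OF bernstein_has_derivs(1,2)[OF assms(1)] assms(2,3)] by blast
  then show ?thesis
    using bernstein_deriv_signs(3)[OF assms(1), of \<eta>] assms(2)
    by (simp add: mult_nonneg_nonpos)
qed

lemma bernstein_second_diff_mono:
  assumes "bernstein g" "0 < x" "x \<le> y" "0 < h"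
  shows "second_diff g x h \<le> second_diff g y h"
  by (rule second_diff_mono_if_third_deriv_nonneg[of g "deriv g" "deriv (deriv g)"
        "deriv (deriv (deriv g))"])
    (use assms bernstein_has_derivs bernstein_deriv_signs(4) in auto)

lemma bernstein_divide_self_antimono:
  assumes "bernstein g" "0 < x" "x \<le> y"
  shows "g y / y \<le> g x / x"
  by (rule divide_self_antimono_if_deriv_antimono[of g "deriv g"])
    (use assms bernstein_has_derivs(1) bernstein_deriv_antimono bernstein_deriv_signs(1) in auto)

text \<open>If the real trace exceeded the identity at some \<open>x\<close>, monotonicity would keep
  all iterates at \<open>x\<close> above \<open>x\<close>, contradicting their convergence to the
  Denjoy--Wolff point \<open>0\<close>.\<close>
lemma DW_zero_real_trace_le:
  assumes DW: "DW_zero u"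
    and real: "\<And>x. 0 < x \<Longrightarrow> u (of_real x) = of_real (real_trace u x)"
    and mono: "\<And>x y. 0 < x \<Longrightarrow> x \<le> y \<Longrightarrow> real_trace u x \<le> real_trace u y"
    and x: "0 < x"
  shows "real_trace u x \<le> x"
proof (rule ccontr)
  assume "\<not> real_trace u x \<le> x"
  then have above: "x < real_trace u x" by simp
  have iter: "(u ^^ n) (of_real x) = of_real ((real_trace u ^^ n) x) \<and> x \<le> (real_trace u ^^ n) x"
    for n
  proof (induction n)
    case (Suc n)
    then show ?case
      using real[of "(real_trace u ^^ n) x"] mono[of x "(real_trace u ^^ n) x"] above x by auto
  qed simp
  have "compact {of_real x :: complex} \<and> {of_real x} \<subseteq> RHP"
    using of_real_in_RHP[OF x] by simp
  with DW have "uniform_limit {of_real x} (\<lambda>n. u ^^ n) (\<lambda>_. 0) sequentially"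
    unfolding DW_zero_def by blast
  then have "(\<lambda>n. (u ^^ n) (of_real x)) \<longlonglongrightarrow> 0"
    by (rule tendsto_uniform_limitI) simp
  then have "(\<lambda>n. norm ((u ^^ n) (of_real x))) \<longlonglongrightarrow> 0"
    by (rule tendsto_norm_zero)
  moreover have "x \<le> norm ((u ^^ n) (of_real x))" for n
    using iter[of n] x by simp
  ultimately have "x \<le> 0" by (meson LIMSEQ_le_const)
  then show False using x by simp
qed

lemma in_BF0_cases:
  assumes "in_BF0 u"
  obtains (identity) "\<forall>z\<in>RHP. u z = z"
    | (bernstein) "bernstein (real_trace u)" "DW_zero u" "\<And>x. 0 < x \<Longrightarrow> u (of_real x) \<in> \<real>"
  using assms unfolding in_BF0_def in_BF_def real_trace_def[abs_def] by blast

lemma real_trace_identity: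
  assumes "\<forall>z\<in>RHP. u z = z" "0 < x"
  shows "real_trace u x = x"
  using assms of_real_in_RHP unfolding real_trace_def by simp

lemma in_BF0_of_real:
  assumes "in_BF0 u" "0 < x"
  shows "u (of_real x) = of_real (real_trace u x)"
  using assms(1)
proof (cases rule: in_BF0_cases)
  case identity
  then show ?thesis using assms(2) of_real_in_RHP real_trace_identity by simp
next
  case bernstein
  then show ?thesis
    using assms(2) unfolding real_trace_def by (simp add: complex_is_Real_iff complex_eq_iff)
qed

lemma hol_self_real_trace_pos:
  assumes "hol_self u" "0 < x"
  shows "0 < real_trace u x"
  using assms of_real_in_RHP unfolding hol_self_def RHP_def real_trace_def by blast

lemma in_BF0_real_trace_mono:
  assumes "in_BF0 u" "0 < x" "x \<le> y"
  shows "real_trace u x \<le> real_trace u y"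
  using assms(1) by (cases rule: in_BF0_cases)
    (use assms bernstein_mono real_trace_identity in auto)

lemma in_BF0_real_trace_le:
  assumes "in_BF0 u" "0 < x"
  shows "real_trace u x \<le> x"
  using assms(1)
proof (cases rule: in_BF0_cases)
  case bernstein
  then show ?thesis
    using DW_zero_real_trace_le in_BF0_of_real in_BF0_real_trace_mono assms by blast
qed (use assms real_trace_identity in simp)

lemma in_BF0_real_trace_divide_self_antimono:
  assumes "in_BF0 u" "0 < x" "x \<le> y"
  shows "real_trace u y / y \<le> real_trace u x / x"
  using assms(1) by (cases rule: in_BF0_cases)
    (use assms bernstein_divide_self_antimono real_trace_identity in auto)

lemma in_BF0_real_trace_second_diff_nonpos:
  assumes "in_BF0 u" "0 < x" "0 < h"
  shows "second_diff (real_trace u) x h \<le> 0"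
  using assms(1)
  by (cases rule: in_BF0_cases)
    (use assms bernstein_second_diff_nonpos real_trace_identity in \<open>auto simp: second_diff_def\<close>)

lemma in_BF0_real_trace_second_diff_mono:
  assumes "in_BF0 u" "0 < x" "x \<le> y" "0 < h"
  shows "second_diff (real_trace u) x h \<le> second_diff (real_trace u) y h"
  using assms(1)
  by (cases rule: in_BF0_cases)
    (use assms bernstein_second_diff_mono real_trace_identity in \<open>auto simp: second_diff_def\<close>)

section \<open>Holomorphic functions real on the positive axis\<close>

lemma isCont_of_real_comp_if_holomorphic:
  assumes "g holomorphic_on RHP" "0 < x"
  shows "isCont (\<lambda>x. g (of_real x)) x"
proof -
  have "isCont g (of_real x)"
    using holomorphic_on_imp_continuous_on[OF assms(1)] open_RHP of_real_in_RHP[OF assms(2)]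
      continuous_on_eq_continuous_at by blast
  moreover have "isCont (of_real :: real \<Rightarrow> complex) x" by (intro continuous_intros)
  ultimately show ?thesis
    using isCont_o2[where f = "of_real :: real \<Rightarrow> complex" and a = x and g = g] by simp
qed

lemma real_trace_has_derivative_if_real:
  assumes g: "g holomorphic_on RHP" and real: "\<And>x. 0 < x \<Longrightarrow> Im (g (of_real x)) = 0"
    and x: "0 < x"
  shows "(real_trace g has_real_derivative real_trace (deriv g) x) (at x)"
    and "Im (deriv g (of_real x)) = 0"
proof -
  have "(g has_field_derivative deriv g (of_real x)) (at (of_real x))"
    using holomorphic_derivI[OF g open_RHP of_real_in_RHP[OF x]] by simp
  then have vd: "((\<lambda>x. g (of_real x)) has_vector_derivative deriv g (of_real x)) (at x)"
    by (rule has_vector_derivative_real_field)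
  show "(real_trace g has_real_derivative real_trace (deriv g) x) (at x)"
    using bounded_linear.has_vector_derivative[OF bounded_linear_Re vd]
    unfolding real_trace_def[abs_def] by (simp add: has_real_derivative_iff_has_vector_derivative)
  have "((\<lambda>x. Im (g (of_real x))) has_real_derivative Im (deriv g (of_real x))) (at x)"
    using bounded_linear.has_vector_derivative[OF bounded_linear_Im vd]
    by (simp add: has_real_derivative_iff_has_vector_derivative)
  then have "((\<lambda>x. 0::real) has_real_derivative Im (deriv g (of_real x))) (at x)"
    by (rule has_field_derivative_transform_within_open[of _ _ _ "{0<..}"]) (use x real in auto)
  then show "Im (deriv g (of_real x)) = 0"
    using DERIV_unique DERIV_const by blast
qed

lemma holomorphic_real_trace_quadratic_bound:
  assumes holo: "f holomorphic_on RHP"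
    and real: "\<And>x. 0 < x \<Longrightarrow> Im (f (of_real x)) = 0"
    and nonneg: "\<And>x. 0 < x \<Longrightarrow> 0 \<le> real_trace f x"
    and ratio: "\<And>x y. 0 < x \<Longrightarrow> x \<le> y \<Longrightarrow> real_trace f x / x \<le> real_trace f y / y"
    and convex: "\<And>x h. 0 < x \<Longrightarrow> 0 < h \<Longrightarrow> 0 \<le> second_diff (real_trace f) x h"
    and anti: "\<And>x y h. 0 < x \<Longrightarrow> x \<le> y \<Longrightarrow> 0 < h \<Longrightarrow>
      second_diff (real_trace f) y h \<le> second_diff (real_trace f) x h"
  defines "L \<equiv> Re (Lim at_top (\<lambda>\<theta>::real. deriv (deriv f) (of_real \<theta>)))"
  shows "0 \<le> L" and "\<And>w. 0 < w \<Longrightarrow> L * w\<^sup>2 / 2 \<le> real_trace f w"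
proof -
  define f1 where "f1 = deriv f"
  define f2 where "f2 = deriv f1"
  have holo1: "f1 holomorphic_on RHP" unfolding f1_def by (rule holomorphic_deriv[OF holo open_RHP])
  have holo2: "f2 holomorphic_on RHP"
    unfolding f2_def by (rule holomorphic_deriv[OF holo1 open_RHP])
  have real1: "\<And>x. 0 < x \<Longrightarrow> Im (f1 (of_real x)) = 0"
    unfolding f1_def using real_trace_has_derivative_if_real(2)[OF holo real] .
  have real2: "\<And>x. 0 < x \<Longrightarrow> Im (f2 (of_real x)) = 0"
    unfolding f2_def using real_trace_has_derivative_if_real(2)[OF holo1 real1] .
  have D: "\<And>x. 0 < x \<Longrightarrow> (real_trace f has_real_derivative real_trace f1 x) (at x)"
    unfolding f1_def using real_trace_has_derivative_if_real(1)[OF holo real] .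
  have D1: "\<And>x. 0 < x \<Longrightarrow> (real_trace f1 has_real_derivative real_trace f2 x) (at x)"
    unfolding f2_def using real_trace_has_derivative_if_real(1)[OF holo1 real1] .
  have cont2: "isCont (real_trace f2) x" if "0 < x" for x
    unfolding real_trace_def[abs_def]
    using isCont_Re[OF isCont_of_real_comp_if_holomorphic[OF holo2 that]] .
  define L' where "L' = (INF x\<in>{0<..}. real_trace f2 x)"
  note bounds = second_diff_imp_quadratic_lower_bound[OF D D1 cont2 nonneg ratio convex anti,
      folded L'_def]
  have "((\<lambda>\<theta>. of_real (real_trace f2 \<theta>) :: complex) \<longlongrightarrow> of_real L') at_top"
    by (rule tendsto_of_real[OF bounds(1)])
  moreover have "eventually (\<lambda>\<theta>. of_real (real_trace f2 \<theta>) = f2 (of_real \<theta>)) at_top"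
    using eventually_gt_at_top[of 0]
    by eventually_elim (use real2 in \<open>simp add: real_trace_def complex_eq_iff\<close>)
  ultimately have "((\<lambda>\<theta>. f2 (of_real \<theta>)) \<longlongrightarrow> of_real L') at_top"
    by (rule Lim_transform_eventually)
  then have "Lim at_top (\<lambda>\<theta>. f2 (of_real \<theta>)) = of_real L'"
    by (rule tendsto_Lim[OF trivial_limit_at_top_linorder])
  then have "L = L'" unfolding L_def f2_def f1_def by simp
  then show "0 \<le> L" and "\<And>w. 0 < w \<Longrightarrow> L * w\<^sup>2 / 2 \<le> real_trace f w"
    using bounds(2,3) by simp_all
qed

section \<open>Integrals of difference quotients\<close>

lemma borel_measurable_antimono:
  fixes H :: "real \<Rightarrow> real"
  assumes "\<And>x y. x \<le> y \<Longrightarrow> H y \<le> H x"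
  shows "H \<in> borel_measurable borel"
proof -
  have "mono (\<lambda>x. - H x)" using assms by (auto simp: mono_def)
  then have "(\<lambda>x. - (- H x)) \<in> borel_measurable borel"
    by (intro borel_measurable_uminus borel_measurable_mono)
  then show ?thesis by simp
qed

lemma nn_integral_indicator_shift:
  fixes f :: "real \<Rightarrow> ennreal"
  assumes [measurable]: "f \<in> borel_measurable borel"
  shows "(\<integral>\<^sup>+ r. indicator {a..T} r * f (r - d) \<partial>lborel)
    = (\<integral>\<^sup>+ r. indicator {a - d..T - d} r * f r \<partial>lborel)"
proof -
  have "(\<integral>\<^sup>+ r. indicator {a - d..T - d} r * f r \<partial>lborel)
      = ennreal \<bar>1\<bar> * (\<integral>\<^sup>+ r. indicator {a - d..T - d} (- d + 1 * r) * f (- d + 1 * r) \<partial>lborel)"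
    by (rule nn_integral_real_affine) auto
  also have "\<dots> = (\<integral>\<^sup>+ r. indicator {a..T} r * f (r - d) \<partial>lborel)"
    by (auto intro!: nn_integral_cong simp: indicator_def)
  finally show ?thesis by simp
qed

lemma nn_integral_interval_le:
  fixes H :: "real \<Rightarrow> real"
  assumes "\<And>r. H r \<le> B" "0 \<le> B" "x \<le> y"
  shows "(\<integral>\<^sup>+ r. indicator {x..y} r * ennreal (H r) \<partial>lborel) \<le> ennreal ((y - x) * B)"
proof -
  have "(\<integral>\<^sup>+ r. indicator {x..y} r * ennreal (H r) \<partial>lborel)
      \<le> (\<integral>\<^sup>+ r. ennreal B * indicator {x..y} r \<partial>lborel)"
    using assms(1) by (intro nn_integral_mono) (auto simp: indicator_def intro: ennreal_leI)
  also have "\<dots> = ennreal B * emeasure lborel {x..y}"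
    by (rule nn_integral_cmult_indicator) simp
  also have "\<dots> = ennreal ((y - x) * B)"
    using assms(2,3) by (simp add: ennreal_mult[symmetric] mult.commute)
  finally show ?thesis .
qed

text \<open>The integral of a difference quotient of a bounded nonincreasing function telescopes:
  only a window of length \<open>d\<close> survives.\<close>
lemma nn_integral_antimono_diff_quot_le:
  fixes H :: "real \<Rightarrow> real"
  assumes anti: "\<And>x y. x \<le> y \<Longrightarrow> H y \<le> H x" and nonneg: "\<And>x. 0 \<le> H x"
    and bound: "\<And>x. H x \<le> B" and d: "0 < d" and "a \<le> T"
  shows "(\<integral>\<^sup>+ r. indicator {a..T} r * ennreal ((H (r - d) - H r) / d) \<partial>lborel) \<le> ennreal B"
proof -
  have [measurable]: "H \<in> borel_measurable borel" by (rule borel_measurable_antimono[OF anti])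
  have "0 \<le> B" using nonneg[of 0] bound[of 0] by simp
  define I where "I = (\<lambda>A. \<integral>\<^sup>+ r. indicator A r * ennreal (H r) \<partial>lborel)"
  define Z where "Z = (\<integral>\<^sup>+ r. indicator {a..T} r * ennreal (H (r - d) - H r) \<partial>lborel)"
  have "Z + I {a..T} = (\<integral>\<^sup>+ r. indicator {a..T} r * ennreal (H (r - d)) \<partial>lborel)"
    unfolding Z_def I_def
  proof (subst nn_integral_add[symmetric])
    show "(\<integral>\<^sup>+ r. indicator {a..T} r * ennreal (H (r - d) - H r)
        + indicator {a..T} r * ennreal (H r) \<partial>lborel)
        = (\<integral>\<^sup>+ r. indicator {a..T} r * ennreal (H (r - d)) \<partial>lborel)"
      using anti[of "r - d" r for r] d nonneg
      by (intro nn_integral_cong) (auto simp: indicator_def ennreal_plus[symmetric])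
  qed auto
  also have "\<dots> = I {a - d..T - d}"
    unfolding I_def by (rule nn_integral_indicator_shift) measurable
  also have "\<dots> \<le> I {a - d..a} + I {a..T}"
    unfolding I_def using d
    by (subst nn_integral_add[symmetric]) (auto intro!: nn_integral_mono simp: indicator_def)
  also have "\<dots> \<le> ennreal (d * B) + I {a..T}"
    using nn_integral_interval_le[of H B "a - d" a, OF bound \<open>0 \<le> B\<close>] d unfolding I_def
    by (intro add_right_mono) simp
  finally have "I {a..T} + Z \<le> I {a..T} + ennreal (d * B)" by (simp add: add.commute)
  moreover have "I {a..T} \<noteq> \<infinity>"
    using nn_integral_interval_le[of H B a T, OF bound \<open>0 \<le> B\<close> \<open>a \<le> T\<close>]
    unfolding I_def by (auto simp: top_unique)
  ultimately have Z: "Z \<le> ennreal (d * B)" by (simp add: ennreal_add_left_cancel_le)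
  have "(\<integral>\<^sup>+ r. indicator {a..T} r * ennreal ((H (r - d) - H r) / d) \<partial>lborel) = ennreal (1 / d) * Z"
    unfolding Z_def using d
    by (subst nn_integral_cmult[symmetric])
      (auto intro!: nn_integral_cong simp: ennreal_mult'[symmetric] indicator_def)
  also have "\<dots> \<le> ennreal (1 / d) * ennreal (d * B)" by (rule mult_left_mono[OF Z]) simp
  also have "\<dots> = ennreal B" using d \<open>0 \<le> B\<close> by (simp add: ennreal_mult[symmetric])
  finally show ?thesis .
qed

lemma nn_integral_le_if_neg_deriv_ge:
  fixes H c :: "real \<Rightarrow> real"
  assumes anti: "\<And>x y. x \<le> y \<Longrightarrow> H y \<le> H x" and nonneg: "\<And>x. 0 \<le> H x"
    and bound: "\<And>x. H x \<le> B"
    and deriv: "AE r in lborel. a < r \<and> r < T \<longrightarrow> (\<exists>D. (H has_real_derivative D) (at r) \<and> c r \<le> - D)"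
    and "a \<le> T"
  shows "(\<integral>\<^sup>+ r. indicator {a..T} r * ennreal (c r) \<partial>lborel) \<le> ennreal B"
proof -
  have H [measurable]: "H \<in> borel_measurable borel" by (rule borel_measurable_antimono[OF anti])
  define u where "u n r = indicator {a..T} r *
    ennreal ((H (r - inverse (real (Suc n))) - H r) / inverse (real (Suc n)))" for n r
  have "AE r in lborel. indicator {a..T} r * ennreal (c r) \<le> liminf (\<lambda>n. u n r)"
    using deriv AE_lborel_singleton[of a] AE_lborel_singleton[of T]
  proof eventually_elim
    case (elim r)
    show ?case
    proof (cases "r \<in> {a..T}")
      case True
      then have "a < r" "r < T" using elim(2,3) by auto
      with elim(1) obtain D where D: "(H has_real_derivative D) (at r)" "c r \<le> - D" by blast
      have "(H (r - inverse (real (Suc n))) - H r) / inverse (real (Suc n))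
          = - (real (Suc n) * (H r - H (r - inverse (real (Suc n)))))" for n
        by (simp add: field_simps)
      then have "(\<lambda>n. (H (r - inverse (real (Suc n))) - H r) / inverse (real (Suc n))) \<longlonglongrightarrow> - D"
        using tendsto_minus[OF left_difference_quotient_tendsto[OF D(1)]] by simp
      then have "(\<lambda>n. u n r) \<longlonglongrightarrow> ennreal (- D)"
        using True unfolding u_def by (simp add: tendsto_ennrealI)
      then have "liminf (\<lambda>n. u n r) = ennreal (- D)"
        by (rule lim_imp_Liminf[OF trivial_limit_sequentially])
      then show ?thesis using True D(2) by (simp add: ennreal_leI)
    qed simp
  qed
  then have "(\<integral>\<^sup>+ r. indicator {a..T} r * ennreal (c r) \<partial>lborel)
      \<le> (\<integral>\<^sup>+ r. liminf (\<lambda>n. u n r) \<partial>lborel)"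
    by (rule nn_integral_mono_AE)
  also have "\<dots> \<le> liminf (\<lambda>n. integral\<^sup>N lborel (u n))"
    by (rule nn_integral_liminf) (simp add: u_def)
  also have "\<dots> \<le> ennreal B"
    unfolding u_def
    by (intro Liminf_le always_eventually allI
        nn_integral_antimono_diff_quot_le[OF anti nonneg bound])
      (simp_all add: \<open>a \<le> T\<close>)
  finally show ?thesis .
qed

lemma simple_function_bounded:
  assumes "simple_function M g" "\<And>x. x \<in> space M \<Longrightarrow> g x < \<infinity>"
  obtains m :: real where "0 \<le> m" "\<And>x. x \<in> space M \<Longrightarrow> g x \<le> ennreal m"
proof
  have fin: "finite (g ` space M)" using simple_functionD(1)[OF assms(1)] .
  define m where "m = Max (insert 0 (enn2real ` g ` space M))"
  show "0 \<le> m" unfolding m_def using fin by simp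
  show "g x \<le> ennreal m" if "x \<in> space M" for x
  proof -
    have "g x = ennreal (enn2real (g x))" using assms(2)[OF that] by (simp add: less_top)
    moreover have "enn2real (g x) \<le> m" unfolding m_def using fin that by (intro Max_ge) auto
    ultimately show ?thesis by (metis ennreal_leI)
  qed
qed

lemma nn_integral_atLeast_eq_SUP_atLeastAtMost:
  assumes [measurable]: "g \<in> borel_measurable lborel"
  shows "(\<integral>\<^sup>+ t. g t * indicator {\<eta>..} t \<partial>lborel)
    = (SUP N::nat. \<integral>\<^sup>+ t. g t * indicator {\<eta>..real N} t \<partial>lborel)"
proof -
  have "(SUP N::nat. g t * indicator {\<eta>..real N} t) = g t * indicator {\<eta>..} t" for t
  proof (cases "\<eta> \<le> t")
    case True
    obtain N0 :: nat where "t \<le> real N0" using real_arch_simple by blast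
    then have "g t \<le> (SUP N::nat. g t * indicator {\<eta>..real N} t)"
      using True by (intro SUP_upper2[of N0]) (auto simp: indicator_def)
    moreover have "(SUP N::nat. g t * indicator {\<eta>..real N} t) \<le> g t"
      by (rule SUP_least) (auto simp: indicator_def)
    ultimately show ?thesis using True by (auto simp: indicator_def)
  qed (simp add: indicator_def)
  moreover have "incseq (\<lambda>N t. g t * indicator {\<eta>..real (N::nat)} t)"
    by (auto simp: incseq_def le_fun_def indicator_def)
  ultimately show ?thesis
    by (subst nn_integral_monotone_convergence_SUP[symmetric]) auto
qed

lemma nn_integral_bounded_near_zero:
  fixes g :: "real \<Rightarrow> ennreal"
  assumes "\<And>t. t < 0 \<Longrightarrow> g t = 0" "\<And>t. g t \<le> ennreal m" "0 \<le> m" "0 \<le> \<eta>"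
  shows "(\<integral>\<^sup>+ t. g t * indicator {..<\<eta>} t \<partial>lborel) \<le> ennreal (m * \<eta>)"
proof -
  have "(\<integral>\<^sup>+ t. g t * indicator {..<\<eta>} t \<partial>lborel) \<le> (\<integral>\<^sup>+ t. ennreal m * indicator {0..\<eta>} t \<partial>lborel)"
    using assms(1,2) by (intro nn_integral_mono) (auto simp: indicator_def not_le)
  also have "\<dots> = ennreal (m * \<eta>)"
    using assms(3,4) by (simp add: nn_integral_cmult_indicator ennreal_mult)
  finally show ?thesis .
qed

text \<open>\<open>f\<close> need not be measurable: the integral is then the supremum over simple minorants,
  and the divergence is witnessed by a measurable minorant on a compact interval away from
  \<open>0\<close>.\<close>
lemma nn_integral_divergent_away_from_zero:
  fixes f :: "real \<Rightarrow> real"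
  assumes divergent: "(\<integral>\<^sup>+ t\<in>{0..}. ennreal (f t) \<partial>lborel) = \<infinity>" and "0 < b"
  obtains g \<eta> and N :: nat where "g \<in> borel_measurable lborel" "\<And>t. g t \<le> ennreal (f t)" "0 < \<eta>"
    "\<eta> \<le> b" "ennreal K < (\<integral>\<^sup>+ t. g t * indicator {\<eta>..real N} t \<partial>lborel)"
proof -
  have "ennreal (max 0 K + 1) < (\<integral>\<^sup>+ t. ennreal (f t) * indicator {0..} t \<partial>lborel)"
    using divergent by simp
  then obtain g where g: "simple_function lborel g" "g \<le> (\<lambda>t. ennreal (f t) * indicator {0..} t)"
      "ennreal (max 0 K + 1) < integral\<^sup>S lborel g"
    unfolding nn_integral_def less_SUP_iff by blast
  have [measurable]: "g \<in> borel_measurable lborel"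
    by (rule borel_measurable_simple_function[OF g(1)])
  have g_le: "g t \<le> ennreal (f t) * indicator {0..} t" for t using g(2) by (simp add: le_fun_def)
  have g_neg: "g t = 0" if "t < 0" for t
    using g_le[of t] that by (simp add: indicator_def)
  have "g t < \<infinity>" for t
    using g_le[of t] by (rule le_less_trans) (simp add: indicator_def)
  then obtain m where m: "0 \<le> m" "\<And>t. t \<in> space lborel \<Longrightarrow> g t \<le> ennreal m"
    using simple_function_bounded[OF g(1)] by blast
  define \<eta> where "\<eta> = min b (1 / (m + 1))"
  have \<eta>: "0 < \<eta>" "\<eta> \<le> b" "\<eta> * m \<le> 1"
    unfolding \<eta>_def using \<open>0 < b\<close> m(1) by (auto simp: min_def field_simps)
  have "(\<integral>\<^sup>+ t. g t * indicator {..<\<eta>} t \<partial>lborel) \<le> ennreal (m * \<eta>)"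
    using g_neg m \<eta>(1) by (intro nn_integral_bounded_near_zero) auto
  also have "\<dots> \<le> 1" using \<eta>(3) by (simp add: mult.commute)
  finally have head: "(\<integral>\<^sup>+ t. g t * indicator {..<\<eta>} t \<partial>lborel) \<le> 1" .
  have split: "integral\<^sup>N lborel g
      = (\<integral>\<^sup>+ t. g t * indicator {..<\<eta>} t \<partial>lborel) + (\<integral>\<^sup>+ t. g t * indicator {\<eta>..} t \<partial>lborel)"
    by (subst nn_integral_add[symmetric]) (auto intro!: nn_integral_cong simp: indicator_def)
  have tail: "ennreal (max 0 K) < (\<integral>\<^sup>+ t. g t * indicator {\<eta>..} t \<partial>lborel)"
  proof (rule ccontr)
    assume "\<not> ?thesis"
    then have "integral\<^sup>N lborel g \<le> 1 + ennreal (max 0 K)"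
      unfolding split by (intro add_mono head) simp
    also have "\<dots> = ennreal (max 0 K + 1)" by (simp add: ennreal_plus[symmetric] add.commute)
    finally show False using g(3) nn_integral_eq_simple_integral[OF g(1)] by simp
  qed
  obtain N :: nat where N: "ennreal (max 0 K) < (\<integral>\<^sup>+ t. g t * indicator {\<eta>..real N} t \<partial>lborel)"
    using tail unfolding nn_integral_atLeast_eq_SUP_atLeastAtMost[OF \<open>g \<in> borel_measurable lborel\<close>]
      less_SUP_iff
    by blast
  show thesis
  proof (rule that[of g \<eta> N])
    show "g t \<le> ennreal (f t)" for t
      using g_le[of t] by (cases "0 \<le> t") (auto simp: indicator_def)
    have "ennreal K \<le> ennreal (max 0 K)" by (rule ennreal_leI) simp
    then show "ennreal K < (\<integral>\<^sup>+ t. g t * indicator {\<eta>..real N} t \<partial>lborel)"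
      using N by (rule le_less_trans)
  qed (use \<eta> in auto)
qed

lemma nn_integral_tail_unbounded:
  fixes f :: "real \<Rightarrow> real"
  assumes divergent: "(\<integral>\<^sup>+ t\<in>{0..}. ennreal (f t) \<partial>lborel) = \<infinity>" and "0 < b"
    and head: "\<And>a. 0 < a \<Longrightarrow> (\<integral>\<^sup>+ t. indicator {a..b} t * ennreal (f t) \<partial>lborel) \<le> ennreal C"
  obtains N where "ennreal M < (\<integral>\<^sup>+ t. indicator {b..N} t * ennreal (f t) \<partial>lborel)"
proof -
  obtain g \<eta> and N :: nat where [measurable]: "g \<in> borel_measurable lborel"
    and g: "\<And>t. g t \<le> ennreal (f t)" and \<eta>: "0 < \<eta>" "\<eta> \<le> b"
    and big: "ennreal (max 0 M + max 0 C) < (\<integral>\<^sup>+ t. g t * indicator {\<eta>..real N} t \<partial>lborel)"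
    using nn_integral_divergent_away_from_zero[OF divergent \<open>0 < b\<close>] by blast
  have "(\<integral>\<^sup>+ t. g t * indicator {\<eta>..real N} t \<partial>lborel)
      \<le> (\<integral>\<^sup>+ t. g t * indicator {\<eta>..b} t \<partial>lborel) + (\<integral>\<^sup>+ t. g t * indicator {b..real N} t \<partial>lborel)"
    by (subst nn_integral_add[symmetric]) (auto intro!: nn_integral_mono simp: indicator_def)
  also have "\<dots> \<le> ennreal C + (\<integral>\<^sup>+ t. indicator {b..real N} t * ennreal (f t) \<partial>lborel)"
  proof (rule add_mono)
    have "(\<integral>\<^sup>+ t. g t * indicator {\<eta>..b} t \<partial>lborel)
        \<le> (\<integral>\<^sup>+ t. indicator {\<eta>..b} t * ennreal (f t) \<partial>lborel)"
      using g by (intro nn_integral_mono) (simp add: indicator_def)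
    then show "(\<integral>\<^sup>+ t. g t * indicator {\<eta>..b} t \<partial>lborel) \<le> ennreal C"
      using head[OF \<eta>(1)] by (rule order_trans)
    show "(\<integral>\<^sup>+ t. g t * indicator {b..real N} t \<partial>lborel)
        \<le> (\<integral>\<^sup>+ t. indicator {b..real N} t * ennreal (f t) \<partial>lborel)"
      using g by (intro nn_integral_mono) (simp add: indicator_def)
  qed
  finally have "ennreal (max 0 M + max 0 C)
      < ennreal C + (\<integral>\<^sup>+ t. indicator {b..real N} t * ennreal (f t) \<partial>lborel)"
    by (rule less_le_trans[OF big])
  show thesis
  proof (rule that, rule ccontr)
    let ?X = "\<integral>\<^sup>+ t. indicator {b..real N} t * ennreal (f t) \<partial>lborel"
    assume "\<not> ennreal M < ?X"
    then have "?X \<le> ennreal (max 0 M)"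
      using ennreal_leI[of M "max 0 M"] by (simp add: not_less)
    moreover have "ennreal C \<le> ennreal (max 0 C)" by (rule ennreal_leI) simp
    ultimately have "ennreal C + ?X \<le> ennreal (max 0 M + max 0 C)"
      by (simp add: ennreal_plus[symmetric] add.commute add_mono)
    with \<open>ennreal (max 0 M + max 0 C) < ennreal C + ?X\<close> show False by simp
  qed
qed

section \<open>The atom at zero of a Laplace transform\<close>

lemma laplace_integrand_antimono:
  fixes y :: ennreal
  assumes "n \<le> m"
  shows "indicator {..<\<infinity>} y * ennreal (exp (- real (Suc m) * enn2real y))
    \<le> indicator {..<\<infinity>} y * ennreal (exp (- real (Suc n) * enn2real y))"
proof -
  have "exp (- real (Suc m) * enn2real y) \<le> exp (- real (Suc n) * enn2real y)"
    using assms by (simp add: mult_right_mono enn2real_nonneg)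
  then show ?thesis by (intro mult_left_mono ennreal_leI) auto
qed

lemma INF_laplace_eq_indicator_zero:
  fixes y :: ennreal
  shows "(INF n. indicator {..<\<infinity>} y * ennreal (exp (- real (Suc n) * enn2real y)))
    = indicator {0} y"
proof (cases "y = 0 \<or> y = \<infinity>")
  case True
  then show ?thesis by auto
next
  case False
  then have y: "0 < enn2real y" "y < \<infinity>"
    by (auto simp: enn2real_positive_iff less_top zero_less_iff_neq_zero)
  have "filterlim (\<lambda>n. real (Suc n) * enn2real y) at_top sequentially"
    by (intro filterlim_at_top_mult_tendsto_pos[OF tendsto_const y(1)]
        filterlim_compose[OF filterlim_real_sequentially filterlim_Suc, unfolded o_def])
  then have "filterlim (\<lambda>n. - (real (Suc n) * enn2real y)) at_bot sequentially"
    by (simp add: filterlim_uminus_at_top)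
  from filterlim_compose[OF exp_at_bot this]
  have "(\<lambda>n. exp (- real (Suc n) * enn2real y)) \<longlonglongrightarrow> 0"
    by (simp only: o_def mult_minus_left)
  then have "(\<lambda>n. indicator {..<\<infinity>} y * ennreal (exp (- real (Suc n) * enn2real y))) \<longlonglongrightarrow> 0"
    using y(2) by (simp add: tendsto_ennrealI[of _ 0, simplified])
  moreover have "decseq (\<lambda>n. indicator {..<\<infinity>} y * ennreal (exp (- real (Suc n) * enn2real y)))"
    using laplace_integrand_antimono by (simp add: decseq_def)
  ultimately have "(INF n. indicator {..<\<infinity>} y * ennreal (exp (- real (Suc n) * enn2real y))) = 0"
    using LIMSEQ_INF LIMSEQ_unique by blast
  then show ?thesis using False by simp
qed

text \<open>Letting \<open>\<theta> \<rightarrow> \<infinity>\<close> in the Laplace transform isolates the atom at \<open>0\<close>.\<close>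
lemma emeasure_zero_ge_if_laplace_ge:
  fixes K :: "ennreal measure"
  assumes K: "prob_space K" "sets K = sets borel"
    and laplace: "\<And>\<theta>. 0 < \<theta> \<Longrightarrow> c \<le> (\<integral>\<^sup>+ y. indicator {..<\<infinity>} y * ennreal (exp (- \<theta> * enn2real y)) \<partial>K)"
  shows "c \<le> emeasure K {0}"
proof -
  define f where "f n y = indicator {..<\<infinity>} y * ennreal (exp (- real (Suc n) * enn2real y))"
    for n and y :: ennreal
  have "f n \<in> borel_measurable borel" for n unfolding f_def by measurable
  then have [measurable]: "f n \<in> borel_measurable K" for n
    using measurable_cong_sets[OF K(2) refl] by blast
  have "decseq f"
    unfolding f_def by (intro antimonoI le_funI laplace_integrand_antimono)
  moreover have "integral\<^sup>N K (f 0) < \<infinity>"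
  proof -
    have "integral\<^sup>N K (f 0) \<le> integral\<^sup>N K (\<lambda>_. 1)"
      by (intro nn_integral_mono) (auto simp: f_def indicator_def)
    then show ?thesis using prob_space.emeasure_space_1[OF K(1)] by (simp add: le_less_trans)
  qed
  ultimately have "(INF n. integral\<^sup>N K (f n)) = (\<integral>\<^sup>+ y. (INF n. f n y) \<partial>K)"
    by (intro nn_integral_monotone_convergence_INF_decseq[symmetric]) auto
  also have "\<dots> = emeasure K {0}"
    using K(2) unfolding f_def INF_laplace_eq_indicator_zero by (simp add: nn_integral_indicator)
  moreover have "c \<le> (INF n. integral\<^sup>N K (f n))"
    unfolding f_def by (intro INF_greatest laplace) simp
  ultimately show ?thesis by simp
qed

section \<open>Evolution families of Bernstein functions\<close>

locale BF0_evolution =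
  fixes v :: "real \<Rightarrow> real \<Rightarrow> complex \<Rightarrow> complex" and \<phi> :: "complex \<Rightarrow> real \<Rightarrow> complex"
  assumes evolution: "abs_cont_rev_evol_family v"
    and in_BF0_v: "\<And>s t. 0 \<le> s \<Longrightarrow> s \<le> t \<Longrightarrow> in_BF0 (v s t)"
    and herglotz: "assoc_herglotz_vf v \<phi>"
begin

abbreviation vr :: "real \<Rightarrow> real \<Rightarrow> real \<Rightarrow> real" where
  "vr s t \<equiv> real_trace (v s t)"

lemma v_of_real: "0 \<le> s \<Longrightarrow> s \<le> t \<Longrightarrow> 0 < x \<Longrightarrow> v s t (of_real x) = of_real (vr s t x)"
  by (rule in_BF0_of_real[OF in_BF0_v])

lemma hol_self_v: "0 \<le> s \<Longrightarrow> s \<le> t \<Longrightarrow> hol_self (v s t)"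
  using evolution[unfolded abs_cont_rev_evol_family_def, THEN conjunct1] by blast

lemma v_refl: "0 \<le> s \<Longrightarrow> z \<in> RHP \<Longrightarrow> v s s z = z"
  using evolution[unfolded abs_cont_rev_evol_family_def, THEN conjunct2, THEN conjunct1] by blast

lemma v_comp: "0 \<le> s \<Longrightarrow> s \<le> t \<Longrightarrow> t \<le> u \<Longrightarrow> z \<in> RHP \<Longrightarrow> v s u z = v s t (v t u z)"
  using evolution[unfolded abs_cont_rev_evol_family_def, THEN conjunct2, THEN conjunct2,
      THEN conjunct1] by blast

lemma v_abs_cont:
  assumes "z \<in> RHP"
  obtains f :: "real \<Rightarrow> real" where "\<And>T. f integrable_on {0..T}"
    "\<And>s t u. 0 \<le> s \<Longrightarrow> s \<le> t \<Longrightarrow> t \<le> u \<Longrightarrow> cmod (v s u z - v s t z) \<le> integral {t..u} f"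
  using evolution[unfolded abs_cont_rev_evol_family_def, THEN conjunct2, THEN conjunct2,
      THEN conjunct2] assms by metis

lemma vr_pos: "0 \<le> s \<Longrightarrow> s \<le> t \<Longrightarrow> 0 < x \<Longrightarrow> 0 < vr s t x"
  by (rule hol_self_real_trace_pos[OF hol_self_v])

lemma vr_comp:
  assumes "0 \<le> s" "s \<le> t" "t \<le> u" "0 < x"
  shows "vr s u x = vr s t (vr t u x)"
proof -
  have "v s u (of_real x) = v s t (v t u (of_real x))"
    using v_comp assms of_real_in_RHP by simp
  also have "\<dots> = v s t (of_real (vr t u x))" using v_of_real assms by simp
  finally show ?thesis unfolding real_trace_def by simp
qed

lemma vr_near_identity:
  assumes "0 \<le> s" "0 < x" "0 < e"
  shows "\<exists>d>0. \<forall>t. s \<le> t \<and> t < s + d \<longrightarrow> \<bar>vr s t x - x\<bar> < e"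
proof -
  obtain f :: "real \<Rightarrow> real" where f: "\<And>T. f integrable_on {0..T}"
    "\<And>s t u. 0 \<le> s \<Longrightarrow> s \<le> t \<Longrightarrow> t \<le> u \<Longrightarrow> cmod (v s u (of_real x) - v s t (of_real x))
      \<le> integral {t..u} f"
    using v_abs_cont[OF of_real_in_RHP[OF assms(2)]] by blast
  have ss: "v s s (of_real x) = of_real x"
    using v_refl[OF assms(1) of_real_in_RHP[OF assms(2)]] .
  have "f integrable_on {s..s+1}"
    using f(1) integrable_on_subinterval[of f "{0..s+1}" s "s+1"] assms(1) by force
  then obtain d where d: "d > 0"
    "\<forall>t. s \<le> t \<and> t < s + d \<longrightarrow> norm (integral {s..s} f - integral {s..t} f) < e"
    using indefinite_integral_continuous_right[of f s "s+1" s e] assms(3) by auto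
  have "\<bar>vr s t x - x\<bar> < e" if t: "s \<le> t" "t < s + d" for t
  proof -
    have "cmod (v s t (of_real x) - v s s (of_real x)) \<le> integral {s..t} f"
      using f(2)[of s s t] assms t by simp
    moreover have "v s t (of_real x) - v s s (of_real x) = of_real (vr s t x - x)"
      using v_of_real[of s t x] ss assms t by simp
    ultimately have "\<bar>vr s t x - x\<bar> \<le> integral {s..t} f"
      by (metis norm_of_real)
    moreover have "\<bar>integral {s..t} f\<bar> < e" using d t by simp
    ultimately show ?thesis by linarith
  qed
  then show ?thesis using d(1) by blast
qed

lemma vr_rational_values_dense:
  assumes s: "0 \<le> s" and ab: "0 < a" "a < b"
  shows "\<exists>t q. t \<in> \<rat> \<and> q \<in> \<rat> \<and> s < t \<and> 0 < q \<and> a < vr s t q \<and> vr s t q < b"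
proof -
  obtain q where q: "q \<in> \<rat>" "(3*a+b)/4 < q" "q < (a+3*b)/4"
    using Rats_dense_in_real[of "(3*a+b)/4" "(a+3*b)/4"] ab by auto
  have q0: "0 < q" using q(2) ab by (simp add: field_simps)
  obtain d where d: "d > 0" "\<forall>t. s \<le> t \<and> t < s + d \<longrightarrow> \<bar>vr s t q - q\<bar> < (b - a)/4"
    using vr_near_identity[OF s q0, of "(b-a)/4"] ab by auto
  obtain t where t: "t \<in> \<rat>" "s < t" "t < s + d"
    using Rats_dense_in_real[of s "s+d"] d by auto
  have "\<bar>vr s t q - q\<bar> < (b - a)/4" using d t by auto
  then have "vr s t q - q < (b - a)/4" "q - vr s t q < (b - a)/4" by linarith+
  then have "a < vr s t q" "vr s t q < b" using q(2,3) by (simp_all add: field_simps)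
  then show ?thesis using t q q0 by blast
qed

lemma herglotz_holomorphic_AE: "AE t in lborel. 0 \<le> t \<longrightarrow> (\<lambda>z. \<phi> z t) holomorphic_on RHP"
  using herglotz[unfolded assoc_herglotz_vf_def, THEN conjunct1] .

lemma herglotz_has_vector_derivative_AE:
  "0 \<le> t \<Longrightarrow> \<zeta> \<in> RHP \<Longrightarrow> AE s in lborel. s \<in> {0..t} \<longrightarrow>
     ((\<lambda>r. v r t \<zeta>) has_vector_derivative \<phi> (v s t \<zeta>) s) (at s within {0..t})"
  using herglotz[unfolded assoc_herglotz_vf_def, THEN conjunct2] by blast

text \<open>By the evolution property, \<open>v\<^bsub>s-1/(n+1),t\<^esub> = v\<^bsub>s-1/(n+1),s\<^esub> \<circ> v\<^bsub>s,t\<^esub>\<close>, so at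
  \<open>w = v\<^bsub>s,t\<^esub>(q)\<close> this is the left difference quotient of \<open>r \<mapsto> v\<^bsub>r,t\<^esub>(q)\<close> at \<open>s\<close>.\<close>
definition diff_quot :: "real \<Rightarrow> nat \<Rightarrow> real \<Rightarrow> real" where
  "diff_quot s n w = real (Suc n) * (w - vr (s - inverse (real (Suc n))) s w)"

lemma diff_quot_props:
  assumes n: "inverse (real (Suc n)) \<le> s"
  shows diff_quot_nonneg: "0 < w \<Longrightarrow> 0 \<le> diff_quot s n w"
    and diff_quot_divide_self_mono: "0 < x \<Longrightarrow> x \<le> y \<Longrightarrow> diff_quot s n x / x \<le> diff_quot s n y / y"
    and diff_quot_second_diff_nonneg: "0 < x \<Longrightarrow> 0 < h \<Longrightarrow> 0 \<le> second_diff (diff_quot s n) x h"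
    and diff_quot_second_diff_antimono: "0 < x \<Longrightarrow> x \<le> y \<Longrightarrow> 0 < h \<Longrightarrow>
      second_diff (diff_quot s n) y h \<le> second_diff (diff_quot s n) x h"
proof -
  define r where "r = s - inverse (real (Suc n))"
  have BF0: "in_BF0 (v r s)" using n by (intro in_BF0_v) (auto simp: r_def)
  have second_diff_eq: "second_diff (diff_quot s n) x h
      = - real (Suc n) * second_diff (vr r s) x h" for x h
    unfolding second_diff_def diff_quot_def r_def by (simp add: algebra_simps)
  have ratio_eq: "diff_quot s n z / z = real (Suc n) * (1 - vr r s z / z)" if "0 < z" for z
    unfolding diff_quot_def r_def using that by (simp add: field_simps)
  show "0 < w \<Longrightarrow> 0 \<le> diff_quot s n w"
    using in_BF0_real_trace_le[OF BF0] unfolding diff_quot_def r_def by simp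
  show "0 < x \<Longrightarrow> x \<le> y \<Longrightarrow> diff_quot s n x / x \<le> diff_quot s n y / y"
    using in_BF0_real_trace_divide_self_antimono[OF BF0, of x y] ratio_eq[of x] ratio_eq[of y]
    by (simp add: mult_left_mono)
  show "0 < x \<Longrightarrow> 0 < h \<Longrightarrow> 0 \<le> second_diff (diff_quot s n) x h"
    using in_BF0_real_trace_second_diff_nonpos[OF BF0, of x h] unfolding second_diff_eq
    by (simp add: mult_nonpos_nonpos)
  show "0 < x \<Longrightarrow> x \<le> y \<Longrightarrow> 0 < h \<Longrightarrow>
      second_diff (diff_quot s n) y h \<le> second_diff (diff_quot s n) x h"
    using in_BF0_real_trace_second_diff_mono[OF BF0, of x y h] unfolding second_diff_eq
    by (simp add: mult_left_mono)
qed

lemma diff_quot_tendsto_herglotz: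
  assumes s: "0 < s" "s < t" and q: "0 < q"
    and der: "((\<lambda>r. v r t (of_real q)) has_vector_derivative \<phi> (v s t (of_real q)) s)
        (at s within {0..t})"
  shows "(\<lambda>n. diff_quot s n (vr s t q)) \<longlonglongrightarrow> Re (\<phi> (of_real (vr s t q)) s)"
    and "Im (\<phi> (of_real (vr s t q)) s) = 0"
proof -
  define w where "w = vr s t q"
  have "at s within {0..t} = at s" by (rule at_within_interior) (use s in simp)
  then have der': "((\<lambda>r. v r t (of_real q)) has_vector_derivative \<phi> (of_real w) s) (at s)"
    using der v_of_real[of s t q] s q unfolding w_def by simp
  have Re_der: "((\<lambda>r. Re (v r t (of_real q))) has_real_derivative Re (\<phi> (of_real w) s)) (at s)"
    using bounded_linear.has_vector_derivative[OF bounded_linear_Re der']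
    by (simp add: has_real_derivative_iff_has_vector_derivative)
  have Im_der: "((\<lambda>r. Im (v r t (of_real q))) has_real_derivative Im (\<phi> (of_real w) s)) (at s)"
    using bounded_linear.has_vector_derivative[OF bounded_linear_Im der']
    by (simp add: has_real_derivative_iff_has_vector_derivative)
  have small: "eventually (\<lambda>n. inverse (real (Suc n)) < s) sequentially"
    using order_tendstoD(2)[OF LIMSEQ_inverse_real_of_nat s(1)] .
  have "eventually (\<lambda>n. real (Suc n) * (Re (v s t (of_real q))
        - Re (v (s - inverse (real (Suc n))) t (of_real q)))
      = diff_quot s n w) sequentially"
    using small
  proof eventually_elim
    case (elim n)
    let ?r = "s - inverse (real (Suc n))"
    have "Re (v ?r t (of_real q)) = vr ?r s (vr s t q)"
      using vr_comp[of ?r s t q] elim s q unfolding real_trace_def by simp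
    then show ?case unfolding diff_quot_def w_def real_trace_def by simp
  qed
  from Lim_transform_eventually[OF left_difference_quotient_tendsto[OF Re_der] this]
  show "(\<lambda>n. diff_quot s n (vr s t q)) \<longlonglongrightarrow> Re (\<phi> (of_real (vr s t q)) s)"
    unfolding w_def .
  have "eventually (\<lambda>n. real (Suc n) * (Im (v s t (of_real q))
        - Im (v (s - inverse (real (Suc n))) t (of_real q)))
      = 0) sequentially"
    using small
  proof eventually_elim
    case (elim n)
    let ?r = "s - inverse (real (Suc n))"
    have "0 < inverse (real (Suc n))" by simp
    then have "0 \<le> ?r" "?r \<le> t" using elim s by linarith+
    then show ?case using v_of_real[of ?r t q] v_of_real[of s t q] s q by simp
  qed
  from Lim_transform_eventually[OF left_difference_quotient_tendsto[OF Im_der] this]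
  have "(\<lambda>n. 0::real) \<longlonglongrightarrow> Im (\<phi> (of_real w) s)" .
  then show "Im (\<phi> (of_real (vr s t q)) s) = 0"
    using LIMSEQ_unique[OF _ tendsto_const] unfolding w_def by metis
qed


text \<open>The quotients converge at the values \<open>v\<^bsub>s,t\<^esub>(q)\<close>, \<open>t, q\<close> rational, which are dense;
  monotonicity of \<open>diff_quot s n w / w\<close> in \<open>w\<close> propagates the convergence to all \<open>w > 0\<close>.\<close>
lemma diff_quot_tendsto_at_good_time:
  assumes s: "0 < s" and holo: "(\<lambda>z. \<phi> z s) holomorphic_on RHP"
    and der: "\<And>t q. t \<in> \<rat> \<Longrightarrow> q \<in> \<rat> \<Longrightarrow> s < t \<Longrightarrow> 0 < q \<Longrightarrow>
       ((\<lambda>r. v r t (of_real q)) has_vector_derivative \<phi> (v s t (of_real q)) s) (at s within {0..t})"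
  defines "f \<equiv> \<lambda>z. \<phi> z s"
  shows "\<And>w. 0 < w \<Longrightarrow> Im (f (of_real w)) = 0"
    and "\<And>w. 0 < w \<Longrightarrow> (\<lambda>n. diff_quot s n w) \<longlonglongrightarrow> real_trace f w"
proof -
  define D where "D = {vr s t q | t q. t \<in> \<rat> \<and> q \<in> \<rat> \<and> s < t \<and> 0 < q}"
  have dense: "\<exists>y\<in>D. a < y \<and> y < b" if ab: "0 < a" "a < b" for a b
  proof -
    obtain t q where "t \<in> \<rat>" "q \<in> \<rat>" "s < t" "0 < q" "a < vr s t q" "vr s t q < b"
      using vr_rational_values_dense[OF less_imp_le[OF s] ab] by blast
    then show ?thesis unfolding D_def by (intro bexI[of _ "vr s t q"]) auto
  qed
  have D_pos: "0 < y" if "y \<in> D" for y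
    using that vr_pos s unfolding D_def by auto
  have on_D: "(\<lambda>n. diff_quot s n y) \<longlonglongrightarrow> real_trace f y" "Im (f (of_real y)) = 0" if "y \<in> D" for y
    using that diff_quot_tendsto_herglotz[OF s(1) _ _ der] unfolding D_def f_def real_trace_def
    by auto
  have small: "eventually (\<lambda>n. inverse (real (Suc n)) \<le> s) sequentially"
    using order_tendstoD(2)[OF LIMSEQ_inverse_real_of_nat s] by (rule eventually_mono) simp
  have holo': "f holomorphic_on RHP" unfolding f_def by (rule holo)
  have cont: "isCont (real_trace f) w" "isCont (\<lambda>x. Im (f (of_real x))) w" if "0 < w" for w
    using isCont_Re[OF isCont_of_real_comp_if_holomorphic[OF holo' that]]
      isCont_Im[OF isCont_of_real_comp_if_holomorphic[OF holo' that]]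
    unfolding real_trace_def[abs_def] by auto
  show "Im (f (of_real w)) = 0" if "0 < w" for w
    by (rule zero_if_zero_on_dense[where h = "\<lambda>x. Im (f (of_real x))", OF dense on_D(2) cont(2)])
      (use that in auto)
  show "(\<lambda>n. diff_quot s n w) \<longlonglongrightarrow> real_trace f w" if w: "0 < w" for w
  proof -
    have "(\<lambda>n. diff_quot s n w / w) \<longlonglongrightarrow> real_trace f w / w"
    proof (rule tendsto_if_mono_and_tendsto_on_dense[where F = "\<lambda>n x. diff_quot s n x / x" and D = D
          and h = "\<lambda>x. real_trace f x / x" and w = w])
      show "eventually (\<lambda>n. \<forall>x y. 0 < x \<longrightarrow> x \<le> y \<longrightarrow> diff_quot s n x / x \<le> diff_quot s n y / y)
        sequentially"
        using small by (rule eventually_mono) (blast intro: diff_quot_divide_self_mono)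
      show "\<exists>y\<in>D. a < y \<and> y < b" if "0 < a" "a < b" for a b using dense[OF that] .
      show "(\<lambda>n. diff_quot s n y / y) \<longlonglongrightarrow> real_trace f y / y" if "y \<in> D" for y
        using D_pos[OF that] by (intro tendsto_divide tendsto_const on_D(1)[OF that]) simp
      show "isCont (\<lambda>x. real_trace f x / x) w"
        using cont(1)[OF w] w by (intro continuous_intros) auto
    qed (rule w)
    then have "(\<lambda>n. diff_quot s n w / w * w) \<longlonglongrightarrow> real_trace f w / w * w"
      by (rule tendsto_mult_right)
    then show ?thesis using w by simp
  qed
qed

lemma herglotz_at_good_time:
  assumes s: "0 < s" and holo: "(\<lambda>z. \<phi> z s) holomorphic_on RHP"
    and der: "\<And>t q. t \<in> \<rat> \<Longrightarrow> q \<in> \<rat> \<Longrightarrow> s < t \<Longrightarrow> 0 < q \<Longrightarrow>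
       ((\<lambda>r. v r t (of_real q)) has_vector_derivative \<phi> (v s t (of_real q)) s) (at s within {0..t})"
  shows "0 \<le> phi2_inf \<phi> s" and "\<And>w. 0 < w \<Longrightarrow> phi2_inf \<phi> s * w\<^sup>2 / 2 \<le> Re (\<phi> (of_real w) s)"
proof -
  define f where "f = (\<lambda>z. \<phi> z s)"
  have holo': "f holomorphic_on RHP" unfolding f_def by (rule holo)
  have real: "\<And>x. 0 < x \<Longrightarrow> Im (f (of_real x)) = 0"
    and lim: "\<And>w. 0 < w \<Longrightarrow> (\<lambda>n. diff_quot s n w) \<longlonglongrightarrow> real_trace f w"
    using diff_quot_tendsto_at_good_time[OF s holo der] unfolding f_def by simp_all
  have small: "eventually (\<lambda>n. inverse (real (Suc n)) \<le> s) sequentially"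
    using order_tendstoD(2)[OF LIMSEQ_inverse_real_of_nat s] by (rule eventually_mono) simp
  have lim_divide: "(\<lambda>n. diff_quot s n w / w) \<longlonglongrightarrow> real_trace f w / w" if "0 < w" for w
    by (intro tendsto_divide tendsto_const lim that) (use that in simp)
  have second_diff_lim: "(\<lambda>n. second_diff (diff_quot s n) x h) \<longlonglongrightarrow> second_diff (real_trace f) x h"
    if "0 < x" "0 < h" for x h
    unfolding second_diff_def using that by (intro tendsto_intros lim) auto
  have nonneg: "0 \<le> real_trace f w" if w: "0 < w" for w
  proof (rule tendsto_lowerbound[OF lim[OF w]])
    show "eventually (\<lambda>n. 0 \<le> diff_quot s n w) sequentially"
      using small by (rule eventually_mono) (rule diff_quot_nonneg[OF _ w])
  qed simp
  have ratio: "real_trace f x / x \<le> real_trace f y / y" if xy: "0 < x" "x \<le> y" for x y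
  proof (rule tendsto_le[OF trivial_limit_sequentially lim_divide lim_divide])
    show "eventually (\<lambda>n. diff_quot s n x / x \<le> diff_quot s n y / y) sequentially"
      using small by (rule eventually_mono) (rule diff_quot_divide_self_mono[OF _ xy])
  qed (use xy in auto)
  have convex: "0 \<le> second_diff (real_trace f) x h" if xh: "0 < x" "0 < h" for x h
  proof (rule tendsto_lowerbound[OF second_diff_lim[OF xh]])
    show "eventually (\<lambda>n. 0 \<le> second_diff (diff_quot s n) x h) sequentially"
      using small by (rule eventually_mono) (rule diff_quot_second_diff_nonneg[OF _ xh])
  qed simp
  have anti: "second_diff (real_trace f) y h \<le> second_diff (real_trace f) x h"
    if xyh: "0 < x" "x \<le> y" "0 < h" for x y h
  proof (rule tendsto_le[OF trivial_limit_sequentially second_diff_lim second_diff_lim])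
    show "eventually (\<lambda>n. second_diff (diff_quot s n) y h
        \<le> second_diff (diff_quot s n) x h) sequentially"
      using small by (rule eventually_mono) (rule diff_quot_second_diff_antimono[OF _ xyh])
  qed (use xyh in auto)
  show "0 \<le> phi2_inf \<phi> s"
    unfolding phi2_inf_def f_def[symmetric]
    by (rule holomorphic_real_trace_quadratic_bound(1)) (fact holo' real nonneg ratio convex anti)+
  show "phi2_inf \<phi> s * w\<^sup>2 / 2 \<le> Re (\<phi> (of_real w) s)" if "0 < w" for w
  proof -
    have "Re (Lim at_top (\<lambda>\<theta>::real. deriv (deriv f) (of_real \<theta>))) * w\<^sup>2 / 2 \<le> real_trace f w"
      by (rule holomorphic_real_trace_quadratic_bound(2))
        (fact holo' real nonneg ratio convex anti that)+
    then show ?thesis unfolding phi2_inf_def f_def real_trace_def .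
  qed
qed

lemma phi2_inf_quadratic_bound_AE:
  "AE s in lborel. 0 < s \<longrightarrow>
     0 \<le> phi2_inf \<phi> s \<and> (\<forall>w>0. phi2_inf \<phi> s * w\<^sup>2 / 2 \<le> Re (\<phi> (of_real w) s))"
proof -
  have "AE s in lborel. \<forall>p\<in>\<rat> \<times> \<rat>. 0 \<le> fst p \<and> 0 < snd p \<longrightarrow> s \<in> {0..fst p} \<longrightarrow>
      ((\<lambda>r. v r (fst p) (of_real (snd p))) has_vector_derivative
         \<phi> (v s (fst p) (of_real (snd p))) s) (at s within {0..fst p})"
  proof (rule AE_ball_countable')
    fix p :: "real \<times> real"
    show "AE s in lborel. 0 \<le> fst p \<and> 0 < snd p \<longrightarrow> s \<in> {0..fst p} \<longrightarrow>
      ((\<lambda>r. v r (fst p) (of_real (snd p))) has_vector_derivative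
         \<phi> (v s (fst p) (of_real (snd p))) s) (at s within {0..fst p})"
      using herglotz_has_vector_derivative_AE[of "fst p" "of_real (snd p)"] of_real_in_RHP
      by (cases "0 \<le> fst p \<and> 0 < snd p") (auto elim!: eventually_mono)
  qed (intro countable_SIGMA countable_rat)
  with herglotz_holomorphic_AE show ?thesis
  proof eventually_elim
    case (elim s)
    show ?case
    proof
      assume "0 < s"
      moreover have "((\<lambda>r. v r t (of_real q)) has_vector_derivative \<phi> (v s t (of_real q)) s)
          (at s within {0..t})" if "t \<in> \<rat>" "q \<in> \<rat>" "s < t" "0 < q" for t q
        using elim(2) that \<open>0 < s\<close> by fastforce
      ultimately show "0 \<le> phi2_inf \<phi> s \<and> (\<forall>w>0. phi2_inf \<phi> s * w\<^sup>2 / 2 \<le> Re (\<phi> (of_real w) s))"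
        using herglotz_at_good_time[of s] elim(1) by simp
    qed
  qed
qed

lemma vr_mono_start:
  assumes "0 \<le> r" "r \<le> r'" "r' \<le> T" "0 < \<theta>"
  shows "vr r T \<theta> \<le> vr r' T \<theta>"
proof -
  have "vr r T \<theta> = vr r r' (vr r' T \<theta>)" using vr_comp assms by simp
  also have "\<dots> \<le> vr r' T \<theta>"
    using in_BF0_real_trace_le[OF in_BF0_v vr_pos] assms by simp
  finally show ?thesis .
qed

lemma vr_has_real_derivative_start:
  assumes "0 < r" "r < T" "0 < \<theta>"
    and "((\<lambda>r. v r T (of_real \<theta>)) has_vector_derivative \<phi> (v r T (of_real \<theta>)) r)
        (at r within {0..T})"
  shows "((\<lambda>r. vr r T \<theta>) has_real_derivative Re (\<phi> (of_real (vr r T \<theta>)) r)) (at r)"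
proof -
  have "at r within {0..T} = at r" by (rule at_within_interior) (use assms in simp)
  then have "((\<lambda>r. v r T (of_real \<theta>)) has_vector_derivative \<phi> (of_real (vr r T \<theta>)) r) (at r)"
    using assms v_of_real[of r T \<theta>] by simp
  from bounded_linear.has_vector_derivative[OF bounded_linear_Re this] show ?thesis
    unfolding real_trace_def by (simp add: has_real_derivative_iff_has_vector_derivative)
qed

text \<open>Along \<open>r \<mapsto> G(r) = v\<^bsub>r,T\<^esub>(\<theta>)\<close> the Herglotz bound gives
  \<open>G' \<ge> \<phi>''(\<infinity>,r) G\<^sup>2/2\<close>, i.e. \<open>-(2/G)' \<ge> \<phi>''(\<infinity>,r)\<close>; integrate.\<close>
lemma nn_integral_phi2_inf_le:
  assumes s: "0 \<le> s" "s < a" "a \<le> T" and \<theta>: "0 < \<theta>"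
  shows "(\<integral>\<^sup>+ r. indicator {a..T} r * ennreal (phi2_inf \<phi> r) \<partial>lborel) \<le> ennreal (2 / vr s T \<theta>)"
proof (rule nn_integral_le_if_neg_deriv_ge)
  define H where "H r = 2 / vr (max s (min r T)) T \<theta>" for r
  have pos: "0 < vr (max s (min r T)) T \<theta>" for r using vr_pos s \<theta> by simp
  show "H y \<le> H x" if "x \<le> y" for x y
    unfolding H_def using pos vr_mono_start[of "max s (min x T)" "max s (min y T)" T \<theta>] that s \<theta>
    by (intro divide_left_mono mult_pos_pos) auto
  show "0 \<le> H x" for x unfolding H_def using pos[of x] by simp
  show "H x \<le> 2 / vr s T \<theta>" for x
    unfolding H_def using pos vr_pos vr_mono_start[of s "max s (min x T)" T \<theta>] s \<theta>
    by (intro divide_left_mono mult_pos_pos) auto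
  have "0 \<le> T" using s by linarith
  show "AE r in lborel. a < r \<and> r < T \<longrightarrow> (\<exists>D. (H has_real_derivative D) (at r) \<and> phi2_inf \<phi> r \<le> - D)"
    using phi2_inf_quadratic_bound_AE
      herglotz_has_vector_derivative_AE[OF \<open>0 \<le> T\<close> of_real_in_RHP[OF \<theta>]]
  proof eventually_elim
    case (elim r)
    show ?case
    proof
      assume r: "a < r \<and> r < T"
      then have "0 < r" using s by linarith
      define G where "G = vr r T \<theta>"
      define G' where "G' = Re (\<phi> (of_real G) r)"
      have G: "0 < G" unfolding G_def using vr_pos \<open>0 < r\<close> r \<theta> by simp
      have "((\<lambda>x. vr x T \<theta>) has_real_derivative G') (at r)"
        unfolding G'_def G_def
        by (rule vr_has_real_derivative_start) (use elim(2) \<open>0 < r\<close> r \<theta> in auto)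
      then have "((\<lambda>x. 2 / vr x T \<theta>) has_real_derivative - (2 * G' / G\<^sup>2)) (at r)"
        using G unfolding G_def by (auto intro!: derivative_eq_intros simp: power2_eq_square)
      then have "(H has_real_derivative - (2 * G' / G\<^sup>2)) (at r)"
      proof (rule has_field_derivative_transform_within_open[of _ _ _ "{s<..<T}"])
        show "2 / vr x T \<theta> = H x" if "x \<in> {s<..<T}" for x using that unfolding H_def by simp
      qed (use r s in auto)
      moreover have "phi2_inf \<phi> r \<le> 2 * G' / G\<^sup>2"
        using elim(1) \<open>0 < r\<close> G unfolding G'_def by (simp add: field_simps)
      ultimately show "\<exists>D. (H has_real_derivative D) (at r) \<and> phi2_inf \<phi> r \<le> - D" by auto
    qed
  qed
qed (use s in auto)


lemma vr_eventually_small: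
  assumes divergent: "(\<integral>\<^sup>+ t\<in>{0..}. ennreal (phi2_inf \<phi> t) \<partial>lborel) = \<infinity>"
    and s: "0 \<le> s" and e: "0 < e"
  obtains U where "\<And>T \<theta>. U \<le> T \<Longrightarrow> 0 < \<theta> \<Longrightarrow> vr s T \<theta> \<le> e"
proof -
  have head: "(\<integral>\<^sup>+ t. indicator {a..s + 1} t * ennreal (phi2_inf \<phi> t) \<partial>lborel)
      \<le> ennreal (2 / vr 0 (s + 1) 1)" if "0 < a" for a
  proof (cases "a \<le> s + 1")
    case True
    then show ?thesis using nn_integral_phi2_inf_le[of 0 a "s + 1" 1] that by simp
  next
    case False
    then have "indicator {a..s + 1} t = (0::ennreal)" for t :: real by simp
    then show ?thesis by simp
  qed
  obtain N where N: "ennreal (2 / e)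
      < (\<integral>\<^sup>+ t. indicator {s + 1..N} t * ennreal (phi2_inf \<phi> t) \<partial>lborel)"
    using nn_integral_tail_unbounded[OF divergent _ head] s by (metis add_nonneg_pos zero_less_one)
  show thesis
  proof (rule that[of "max N (s + 1)"])
    fix T \<theta> :: real assume T: "max N (s + 1) \<le> T" and \<theta>: "0 < \<theta>"
    have "(\<integral>\<^sup>+ t. indicator {s + 1..N} t * ennreal (phi2_inf \<phi> t) \<partial>lborel)
        \<le> (\<integral>\<^sup>+ t. indicator {s + 1..T} t * ennreal (phi2_inf \<phi> t) \<partial>lborel)"
      using T by (intro nn_integral_mono) (simp add: indicator_def)
    also have "\<dots> \<le> ennreal (2 / vr s T \<theta>)"
      using nn_integral_phi2_inf_le[of s "s + 1" T \<theta>] s T \<theta> by simp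
    finally have "ennreal (2 / e) < ennreal (2 / vr s T \<theta>)"
      by (rule less_le_trans[OF N])
    then have "2 / e < 2 / vr s T \<theta>" using e by (simp add: ennreal_less_iff)
    moreover have "0 < vr s T \<theta>" using vr_pos s T \<theta> by simp
    ultimately show "vr s T \<theta> \<le> e" using e by (simp add: frac_less2 divide_less_cancel field_simps)
  qed
qed

lemma v_inf_eq_SUP:
  assumes "0 \<le> s" "s \<le> T"
  shows "v_inf v s T = (SUP \<theta>\<in>{0<..}. ennreal (vr s T \<theta>))"
proof -
  have "((\<lambda>\<theta>. ennreal (vr s T \<theta>)) \<longlongrightarrow> (SUP \<theta>\<in>{0<..}. ennreal (vr s T \<theta>))) at_top"
    using in_BF0_real_trace_mono[OF in_BF0_v[OF assms]]
    by (intro tendsto_SUP_at_top_if_mono ennreal_leI)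
  then show ?thesis
    unfolding v_inf_def real_trace_def[symmetric]
    by (rule tendsto_Lim[OF trivial_limit_at_top_linorder])
qed

lemma v_inf_tendsto_zero:
  assumes divergent: "(\<integral>\<^sup>+ t\<in>{0..}. ennreal (phi2_inf \<phi> t) \<partial>lborel) = \<infinity>" and s: "0 \<le> s"
  shows "((\<lambda>t. v_inf v s t) \<longlongrightarrow> 0) at_top"
proof (rule decreasing_tendsto)
  fix a :: ennreal assume "0 < a"
  then obtain e' where "0 < e'" "e' < a" using dense by blast
  then obtain e where e: "0 < e" "ennreal e < a" by (cases e' rule: ennreal_cases) auto
  obtain U where U: "\<And>T \<theta>. U \<le> T \<Longrightarrow> 0 < \<theta> \<Longrightarrow> vr s T \<theta> \<le> e"
    using vr_eventually_small[OF divergent s e(1)] by blast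
  show "eventually (\<lambda>t. v_inf v s t < a) at_top"
    using eventually_ge_at_top[of "max U s"]
  proof eventually_elim
    case (elim T)
    then have "s \<le> T" "U \<le> T" by auto
    then have "v_inf v s T \<le> ennreal e"
      unfolding v_inf_eq_SUP[OF s \<open>s \<le> T\<close>] using U by (auto intro!: SUP_least ennreal_leI)
    then show ?case using e(2) by (rule le_less_trans)
  qed
qed simp

end

section \<open>Extinction of the branching process\<close>

lemma Dpaths_absorbed_at_zero:
  assumes "f \<in> Dpaths" "0 \<le> t" "f t = 0" "t \<le> u"
  shows "f u = 0"
  using assms(1)[unfolded Dpaths_def mem_Collect_eq, THEN conjunct2, THEN conjunct2, THEN conjunct1]
    assms(2-4) by blast

lemma extinction_time_less_top_iff:
  assumes "(\<lambda>t. Z t \<omega>) \<in> Dpaths" "0 \<le> s"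
  shows "extinction_time Z s \<omega> < \<infinity> \<longleftrightarrow> (\<exists>n::nat. Z (s + real n) \<omega> = 0)"
proof
  assume finite: "extinction_time Z s \<omega> < \<infinity>"
  have "{t. s \<le> t \<and> Z t \<omega> = 0} \<noteq> {}"
  proof
    assume none: "{t. s \<le> t \<and> Z t \<omega> = 0} = {}"
    have "extinction_time Z s \<omega> = Inf (ereal ` {})" unfolding extinction_time_def none ..
    with finite show False by (simp add: top_ereal_def)
  qed
  then obtain t where t: "s \<le> t" "Z t \<omega> = 0" by auto
  obtain n :: nat where "t - s \<le> real n" using real_arch_simple by blast
  then show "\<exists>n::nat. Z (s + real n) \<omega> = 0"
    using Dpaths_absorbed_at_zero[OF assms(1), of t "s + real n"] t assms(2) by auto
next
  assume "\<exists>n::nat. Z (s + real n) \<omega> = 0"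
  then obtain n :: nat where "Z (s + real n) \<omega> = 0" by blast
  then have "extinction_time Z s \<omega> \<le> ereal (s + real n)"
    unfolding extinction_time_def by (intro Inf_lower) auto
  also have "\<dots> < \<infinity>" by simp
  finally show "extinction_time Z s \<omega> < \<infinity>" .
qed

lemma branching_process_prob_space:
  "branching_process v P Z \<Longrightarrow> prob_space (P s x)"
  unfolding branching_process_def by (elim exE conjE) blast

lemma branching_process_measurable:
  "branching_process v P Z \<Longrightarrow> Z t \<in> borel_measurable (P s x)"
  unfolding branching_process_def by (elim exE conjE) blast

lemma branching_process_paths:
  "branching_process v P Z \<Longrightarrow> \<omega> \<in> space (P s x) \<Longrightarrow> (\<lambda>t. Z t \<omega>) \<in> Dpaths"
  unfolding branching_process_def by (elim exE conjE) blast

lemma branching_process_initial: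
  "branching_process v P Z \<Longrightarrow> 0 \<le> s \<Longrightarrow> AE \<omega> in P s x. Z s \<omega> = x"
  unfolding branching_process_def by (elim exE conjE) blast

lemma branching_process_markov:
  assumes "branching_process v P Z"
  obtains k where "laplace_kernels v k"
    "\<And>s x u B. 0 \<le> s \<Longrightarrow> s \<le> u \<Longrightarrow> B \<in> sets borel \<Longrightarrow>
       emeasure (P s x) {\<omega>\<in>space (P s x). Z u \<omega> \<in> B} = (\<integral>\<^sup>+\<omega>. emeasure (k s u (Z s \<omega>)) B \<partial>P s x)"
proof -
  have "\<exists>k. laplace_kernels v k \<and> (\<forall>s x t u B A. 0 \<le> s \<and> s \<le> t \<and> t \<le> u \<and> B \<in> sets borel \<and>
          A \<in> sigma_sets (space (P s x))
                 {{\<omega>\<in>space (P s x). Z r \<omega> \<in> C} | r C. r \<in> {s..t} \<and> C \<in> sets borel} \<longrightarrow>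
          emeasure (P s x) (A \<inter> {\<omega>\<in>space (P s x). Z u \<omega> \<in> B})
            = (\<integral>\<^sup>+\<omega>\<in>A. emeasure (k t u (Z t \<omega>)) B \<partial>P s x))"
    using assms unfolding branching_process_def by (elim exE conjE) (intro exI conjI; assumption)
  then obtain k where k: "laplace_kernels v k"
    and markov: "\<forall>s x t u B A. 0 \<le> s \<and> s \<le> t \<and> t \<le> u \<and> B \<in> sets borel \<and>
          A \<in> sigma_sets (space (P s x))
                 {{\<omega>\<in>space (P s x). Z r \<omega> \<in> C} | r C. r \<in> {s..t} \<and> C \<in> sets borel} \<longrightarrow>
          emeasure (P s x) (A \<inter> {\<omega>\<in>space (P s x). Z u \<omega> \<in> B})
            = (\<integral>\<^sup>+\<omega>\<in>A. emeasure (k t u (Z t \<omega>)) B \<partial>P s x)"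
    by blast
  show thesis
  proof (rule that[OF k])
    fix s u :: real and x :: ennreal and B :: "ennreal set" assume "0 \<le> s" "s \<le> u" "B \<in> sets borel"
    then have "emeasure (P s x) (space (P s x) \<inter> {\<omega>\<in>space (P s x). Z u \<omega> \<in> B})
        = (\<integral>\<^sup>+\<omega>. emeasure (k s u (Z s \<omega>)) B \<partial>P s x)"
      using markov[rule_format, of s s u B "space (P s x)" x] by (simp add: sigma_sets_top)
    moreover have "space (P s x) \<inter> {\<omega>\<in>space (P s x). Z u \<omega> \<in> B} = {\<omega>\<in>space (P s x). Z u \<omega> \<in> B}"
      by blast
    ultimately show "emeasure (P s x) {\<omega>\<in>space (P s x). Z u \<omega> \<in> B}
        = (\<integral>\<^sup>+\<omega>. emeasure (k s u (Z s \<omega>)) B \<partial>P s x)"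
      by simp
  qed
qed

lemma branching_process_zero_prob_ge:
  assumes bp: "branching_process v P Z" and su: "0 \<le> s" "s \<le> u" and x: "0 < x"
    and small: "\<And>\<theta>. 0 < \<theta> \<Longrightarrow> Re (v s u (of_real \<theta>)) \<le> e"
  shows "ennreal (exp (- x * e))
    \<le> emeasure (P s (ennreal x)) {\<omega>\<in>space (P s (ennreal x)). Z u \<omega> = 0}"
proof -
  obtain k where k: "laplace_kernels v k"
    and markov: "\<And>s x u B. 0 \<le> s \<Longrightarrow> s \<le> u \<Longrightarrow> B \<in> sets borel \<Longrightarrow>
       emeasure (P s x) {\<omega>\<in>space (P s x). Z u \<omega> \<in> B} = (\<integral>\<^sup>+\<omega>. emeasure (k s u (Z s \<omega>)) B \<partial>P s x)"
    using branching_process_markov[OF bp] by blast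
  have K: "prob_space (k s u (ennreal x))" "sets (k s u (ennreal x)) = sets borel"
    and laplace: "\<And>\<theta>. 0 < \<theta> \<Longrightarrow>
      (\<integral>\<^sup>+ y. indicator {..<\<infinity>} y * ennreal (exp (- \<theta> * enn2real y)) \<partial>k s u (ennreal x))
        = ennreal (exp (- x * Re (v s u (of_real \<theta>))))"
    using k su x unfolding laplace_kernels_def by auto
  have "ennreal (exp (- x * e)) \<le> emeasure (k s u (ennreal x)) {0}"
  proof (rule emeasure_zero_ge_if_laplace_ge[OF K])
    fix \<theta> :: real assume "0 < \<theta>"
    then have "exp (- x * e) \<le> exp (- x * Re (v s u (of_real \<theta>)))" using small x by simp
    then show "ennreal (exp (- x * e))
        \<le> (\<integral>\<^sup>+ y. indicator {..<\<infinity>} y * ennreal (exp (- \<theta> * enn2real y)) \<partial>k s u (ennreal x))"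
      unfolding laplace[OF \<open>0 < \<theta>\<close>] by (rule ennreal_leI)
  qed
  also have "\<dots> = (\<integral>\<^sup>+\<omega>. emeasure (k s u (Z s \<omega>)) {0} \<partial>P s (ennreal x))"
  proof -
    have "(\<integral>\<^sup>+\<omega>. emeasure (k s u (Z s \<omega>)) {0} \<partial>P s (ennreal x))
        = (\<integral>\<^sup>+\<omega>. emeasure (k s u (ennreal x)) {0} \<partial>P s (ennreal x))"
      using branching_process_initial[OF bp su(1)] by (rule nn_integral_cong_AE[OF AE_mp]) simp
    also have "\<dots> = emeasure (k s u (ennreal x)) {0}"
      using prob_space.emeasure_space_1[OF branching_process_prob_space[OF bp]] by simp
    finally show ?thesis by simp
  qed
  also have "\<dots> = emeasure (P s (ennreal x)) {\<omega>\<in>space (P s (ennreal x)). Z u \<omega> = 0}"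
    using markov[OF su, of "{0}" "ennreal x"] by simp
  finally show ?thesis .
qed

lemma branching_process_extinction_event:
  fixes x :: ennreal
  assumes bp: "branching_process v P Z" and s: "0 \<le> s"
  defines "E \<equiv> {\<omega>\<in>space (P s x). extinction_time Z s \<omega> < \<infinity>}"
  shows "E \<in> sets (P s x)"
    and "s \<le> u \<Longrightarrow> {\<omega>\<in>space (P s x). Z u \<omega> = 0} \<subseteq> E"
proof -
  have "extinction_time Z s \<omega> < \<infinity> \<longleftrightarrow> (\<exists>n::nat. Z (s + real n) \<omega> = 0)"
    if "\<omega> \<in> space (P s x)" for \<omega>
    using extinction_time_less_top_iff[of Z \<omega> s, OF branching_process_paths[OF bp that] s] .
  then have "E = (\<Union>n::nat. {\<omega>\<in>space (P s x). Z (s + real n) \<omega> = 0})"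
    unfolding E_def by blast
  also have "\<dots> \<in> sets (P s x)"
    using branching_process_measurable[OF bp] by measurable
  finally show "E \<in> sets (P s x)" .
  show "{\<omega>\<in>space (P s x). Z u \<omega> = 0} \<subseteq> E" if "s \<le> u"
  proof
    fix \<omega> assume \<omega>: "\<omega> \<in> {\<omega>\<in>space (P s x). Z u \<omega> = 0}"
    then have "extinction_time Z s \<omega> \<le> ereal u"
      unfolding extinction_time_def using that by (intro Inf_lower) auto
    also have "\<dots> < \<infinity>" by simp
    finally show "\<omega> \<in> E" unfolding E_def using \<omega> by simp
  qed
qed

lemma branching_process_extinction_certain:
  assumes bp: "branching_process v P Z" and s: "0 \<le> s" and x: "0 < x"
    and small: "\<And>e. 0 < e \<Longrightarrow> \<exists>u\<ge>s. \<forall>\<theta>>0. Re (v s u (of_real \<theta>)) \<le> e"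
  shows "measure (P s (ennreal x)) {\<omega>\<in>space (P s (ennreal x)). extinction_time Z s \<omega> < \<infinity>} = 1"
proof -
  define M where "M = P s (ennreal x)"
  interpret M: prob_space M unfolding M_def by (rule branching_process_prob_space[OF bp])
  define E where "E = {\<omega>\<in>space M. extinction_time Z s \<omega> < \<infinity>}"
  note event = branching_process_extinction_event[OF bp s, where x = "ennreal x"]
  have bound: "exp (- x * e) \<le> measure M E" if e: "0 < e" for e
  proof -
    obtain u where u: "s \<le> u" "\<forall>\<theta>>0. Re (v s u (of_real \<theta>)) \<le> e" using small[OF e] by blast
    have "ennreal (exp (- x * e)) \<le> emeasure M {\<omega>\<in>space M. Z u \<omega> = 0}"
      unfolding M_def using u(2) by (intro branching_process_zero_prob_ge[OF bp s u(1) x]) auto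
    also have "\<dots> \<le> emeasure M E"
      unfolding M_def E_def by (rule emeasure_mono[OF event(2)[OF u(1)] event(1)])
    finally show ?thesis using M.emeasure_eq_measure[of E] by simp
  qed
  have "1 \<le> measure M E"
  proof (rule tendsto_upperbound)
    show "((\<lambda>e. exp (- x * e)) \<longlongrightarrow> 1) (at_right 0)"
      by (auto intro!: tendsto_eq_intros)
    show "eventually (\<lambda>e. exp (- x * e) \<le> measure M E) (at_right 0)"
      using bound by (auto simp: eventually_at_right_field intro!: exI[of _ 1])
  qed simp
  then show ?thesis using M.prob_le_1[of E] unfolding E_def M_def by simp
qed

theorem mainTheorem11:
  fixes v :: "real \<Rightarrow> real \<Rightarrow> complex \<Rightarrow> complex"
    and \<phi> :: "complex \<Rightarrow> real \<Rightarrow> complex"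
  assumes "abs_cont_rev_evol_family v"
    and "\<forall>s t. 0 \<le> s \<and> s \<le> t \<longrightarrow> in_BF0 (v s t)"
    and "assoc_herglotz_vf v \<phi>"
    and "(\<integral>\<^sup>+ t\<in>{0..}. ennreal (phi2_inf \<phi> t) \<partial>lborel) = \<infinity>"
  shows "(\<forall>s\<ge>0. ((\<lambda>t. v_inf v s t) \<longlongrightarrow> 0) at_top) \<and>
    (\<forall>(P :: real \<Rightarrow> ennreal \<Rightarrow> 'w measure) Z. branching_process v P Z \<longrightarrow>
       (\<forall>s\<ge>0. \<forall>x::real>0.
          measure (P s (ennreal x)) {\<omega>\<in>space (P s (ennreal x)). extinction_time Z s \<omega> < \<infinity>} = 1))"
proof -
  interpret BF0_evolution v \<phi> using assms(1-3) by unfold_locales auto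
  have small: "\<exists>u\<ge>s. \<forall>\<theta>>0. Re (v s u (of_real \<theta>)) \<le> e" if s: "0 \<le> s" and e: "0 < e" for s e
  proof -
    obtain U where "\<And>T \<theta>. U \<le> T \<Longrightarrow> 0 < \<theta> \<Longrightarrow> vr s T \<theta> \<le> e"
      using vr_eventually_small[OF assms(4) s e] by blast
    then show ?thesis unfolding real_trace_def by (intro exI[of _ "max U s"]) auto
  qed
  show ?thesis
  proof (intro conjI allI impI)
    fix s :: real assume "0 \<le> s"
    then show "((\<lambda>t. v_inf v s t) \<longlongrightarrow> 0) at_top" by (rule v_inf_tendsto_zero[OF assms(4)])
  next
    fix P :: "real \<Rightarrow> ennreal \<Rightarrow> 'w measure" and Z and s x :: real
    assume "branching_process v P Z" "0 \<le> s" "0 < x"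
    then show "measure (P s (ennreal x)) {\<omega>\<in>space (P s (ennreal x)). extinction_time Z s \<omega> < \<infinity>} = 1"
      using small[OF \<open>0 \<le> s\<close>] by (rule branching_process_extinction_certain)
  qed
qed

end
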